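(* Let $\mathcal{F}=(f_s:I_s\to[n]\mid s\in S)$ be an $S$-claw in $\Delta$. The image of $\mathcal{F}$ under the canonical functor $\Delta\to\Lambda$ is strongly biCartesian in $\Lambda$ (i.e. it extends to a strongly Cartesian $S$-cube in $\Lambda$, and this cube is also strongly coCartesian) if and only if $\mathcal{F}$ is cyclically compatible.
   Context: $\Delta$: simplex category of nonempty finite linear orders $[n]=\{0<\dots<n\}$, weakly monotone maps. $\Lambda$: Connes' cyclic category (objects the cyclic sets $\langle n\rangle=(\mathbb{Z}/(n+1),+1)$); the canonical functor $\Delta\to\Lambda$, $[n]\mapsto\langle n\rangle$, identifies $\Delta$ with the slice $\Lambda_{/\langle0\rangle}$ and is the forgetful functor. An $S$-cube is a functor $\mathcal{P}(S)^{\mathrm{op}}\to\mathcal{D}$ from the opposite of the subset poset of $S$; it is strongly Cartesian / strongly coCartesian if all squares $Q(T\cup\{s,s'\})\to Q(T\cup\{s\}),Q(T\cup\{s'\})\to Q(T)$ ($s\ne s'\notin T$) are pullbacks / pushouts. An $S$-claw on $[n]$ is a family of morphisms $f_s:I_s\to[n]$. It is compatible if (BC1) for each $i\in[n]$ at most one $s$ has $f_s^{-1}\{i\}$ not a singleton, and (BC2) for each $0<i\le n$ at most one $s$ has $\{i-1,i\}\not\subseteq f_s(I_s)$. It is cyclically compatible if it is compatible and all but at most one $s\in S$ satisfy $\{0,n\}\subseteq f_s(I_s)$. *)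

theory Defs
  imports Main
begin

text \<open>A morphism [m] \<rightarrow> [n] in \<Delta>: a weakly monotone map {0..m} \<rightarrow> {0..n},
  represented by a function nat \<Rightarrow> nat (values outside {0..m} are irrelevant).\<close>
definition delta_mor :: "nat \<Rightarrow> nat \<Rightarrow> (nat \<Rightarrow> nat) \<Rightarrow> bool" where
  "delta_mor m n g \<longleftrightarrow> (\<forall>i\<le>m. g i \<le> n) \<and> (\<forall>i j. i \<le> j \<and> j \<le> m \<longrightarrow> g i \<le> g j)"

text \<open>Objects: natural numbers n (standing for \<langle>n\<rangle> = Z/(n+1)).
  A morphism \<langle>m\<rangle> \<rightarrow> \<langle>n\<rangle> is a weakly monotone map F : Z \<rightarrow> Z with
  F (i + m + 1) = F i + n + 1, taken modulo translation by multiples of n+1;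
  we use the normal form 0 \<le> F 0 \<le> n as unique representative.\<close>
definition lam_hom :: "nat \<Rightarrow> nat \<Rightarrow> (int \<Rightarrow> int) set" where
  "lam_hom m n = {F. mono F \<and> (\<forall>i. F (i + int m + 1) = F i + int n + 1)
                       \<and> 0 \<le> F 0 \<and> F 0 \<le> int n}"

definition lam_comp :: "nat \<Rightarrow> (int \<Rightarrow> int) \<Rightarrow> (int \<Rightarrow> int) \<Rightarrow> (int \<Rightarrow> int)" where
  "lam_comp p G F = (\<lambda>i. G (F i) - (int p + 1) * (G (F 0) div (int p + 1)))"

definition delta_to_lambda :: "nat \<Rightarrow> nat \<Rightarrow> (nat \<Rightarrow> nat) \<Rightarrow> (int \<Rightarrow> int)" where
  "delta_to_lambda m n g =
     (\<lambda>i. int (g (nat (i mod (int m + 1)))) + (int n + 1) * (i div (int m + 1)))"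

definition lam_pullback ::
  "nat \<Rightarrow> nat \<Rightarrow> nat \<Rightarrow> nat \<Rightarrow> (int \<Rightarrow> int) \<Rightarrow> (int \<Rightarrow> int) \<Rightarrow> (int \<Rightarrow> int) \<Rightarrow> (int \<Rightarrow> int) \<Rightarrow> bool" where
  "lam_pullback P A B C pa pb ca cb \<longleftrightarrow>
     pa \<in> lam_hom P A \<and> pb \<in> lam_hom P B \<and> ca \<in> lam_hom A C \<and> cb \<in> lam_hom B C \<and>
     lam_comp C ca pa = lam_comp C cb pb \<and>
     (\<forall>X x y. x \<in> lam_hom X A \<longrightarrow> y \<in> lam_hom X B \<longrightarrow> lam_comp C ca x = lam_comp C cb y \<longrightarrow>
        (\<exists>!u. u \<in> lam_hom X P \<and> lam_comp A pa u = x \<and> lam_comp B pb u = y))"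

definition lam_pushout ::
  "nat \<Rightarrow> nat \<Rightarrow> nat \<Rightarrow> nat \<Rightarrow> (int \<Rightarrow> int) \<Rightarrow> (int \<Rightarrow> int) \<Rightarrow> (int \<Rightarrow> int) \<Rightarrow> (int \<Rightarrow> int) \<Rightarrow> bool" where
  "lam_pushout P A B C pa pb ca cb \<longleftrightarrow>
     pa \<in> lam_hom P A \<and> pb \<in> lam_hom P B \<and> ca \<in> lam_hom A C \<and> cb \<in> lam_hom B C \<and>
     lam_comp C ca pa = lam_comp C cb pb \<and>
     (\<forall>X x y. x \<in> lam_hom A X \<longrightarrow> y \<in> lam_hom B X \<longrightarrow> lam_comp X x pa = lam_comp X y pb \<longrightarrow>
        (\<exists>!u. u \<in> lam_hom C X \<and> lam_comp X u ca = x \<and> lam_comp X u cb = y))"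

text \<open>An S-cube Q : P(S)^op \<rightarrow> \<Lambda>: objects Qo T, and for T \<subseteq> T' \<subseteq> S a morphism
  Qm T T' : Qo T' \<rightarrow> Qo T, functorially.\<close>
definition lam_cube :: "'s set \<Rightarrow> ('s set \<Rightarrow> nat) \<Rightarrow> ('s set \<Rightarrow> 's set \<Rightarrow> (int \<Rightarrow> int)) \<Rightarrow> bool" where
  "lam_cube S Qo Qm \<longleftrightarrow>
     (\<forall>T T'. T \<subseteq> T' \<and> T' \<subseteq> S \<longrightarrow> Qm T T' \<in> lam_hom (Qo T') (Qo T)) \<and>
     (\<forall>T. T \<subseteq> S \<longrightarrow> Qm T T = id) \<and>
     (\<forall>T T' T''. T \<subseteq> T' \<and> T' \<subseteq> T'' \<and> T'' \<subseteq> S \<longrightarrow>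
        Qm T T'' = lam_comp (Qo T) (Qm T T') (Qm T' T''))"

definition strongly_cartesian :: "'s set \<Rightarrow> ('s set \<Rightarrow> nat) \<Rightarrow> ('s set \<Rightarrow> 's set \<Rightarrow> (int \<Rightarrow> int)) \<Rightarrow> bool" where
  "strongly_cartesian S Qo Qm \<longleftrightarrow>
     (\<forall>T s s'. T \<subseteq> S \<and> s \<in> S \<and> s' \<in> S \<and> s \<noteq> s' \<and> s \<notin> T \<and> s' \<notin> T \<longrightarrow>
        lam_pullback (Qo (insert s (insert s' T))) (Qo (insert s T)) (Qo (insert s' T)) (Qo T)
          (Qm (insert s T) (insert s (insert s' T))) (Qm (insert s' T) (insert s (insert s' T)))
          (Qm T (insert s T)) (Qm T (insert s' T)))"

definition strongly_cocartesian :: "'s set \<Rightarrow> ('s set \<Rightarrow> nat) \<Rightarrow> ('s set \<Rightarrow> 's set \<Rightarrow> (int \<Rightarrow> int)) \<Rightarrow> bool" where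
  "strongly_cocartesian S Qo Qm \<longleftrightarrow>
     (\<forall>T s s'. T \<subseteq> S \<and> s \<in> S \<and> s' \<in> S \<and> s \<noteq> s' \<and> s \<notin> T \<and> s' \<notin> T \<longrightarrow>
        lam_pushout (Qo (insert s (insert s' T))) (Qo (insert s T)) (Qo (insert s' T)) (Qo T)
          (Qm (insert s T) (insert s (insert s' T))) (Qm (insert s' T) (insert s (insert s' T)))
          (Qm T (insert s T)) (Qm T (insert s' T)))"

definition extends_claw ::
  "'s set \<Rightarrow> nat \<Rightarrow> ('s \<Rightarrow> nat) \<Rightarrow> ('s \<Rightarrow> nat \<Rightarrow> nat) \<Rightarrow>
   ('s set \<Rightarrow> nat) \<Rightarrow> ('s set \<Rightarrow> 's set \<Rightarrow> (int \<Rightarrow> int)) \<Rightarrow> bool" where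
  "extends_claw S n m f Qo Qm \<longleftrightarrow>
     lam_cube S Qo Qm \<and> Qo {} = n \<and>
     (\<forall>s\<in>S. Qo {s} = m s \<and> Qm {} {s} = delta_to_lambda (m s) n (f s))"

definition compatible :: "'s set \<Rightarrow> nat \<Rightarrow> ('s \<Rightarrow> nat) \<Rightarrow> ('s \<Rightarrow> nat \<Rightarrow> nat) \<Rightarrow> bool" where
  "compatible S n m f \<longleftrightarrow>
     (\<forall>i\<le>n. card {s\<in>S. card {j. j \<le> m s \<and> f s j = i} \<noteq> 1} \<le> 1) \<and>
     (\<forall>i. 0 < i \<and> i \<le> n \<longrightarrow> card {s\<in>S. \<not> {i - 1, i} \<subseteq> f s ` {0..m s}} \<le> 1)"

definition cyclically_compatible :: "'s set \<Rightarrow> nat \<Rightarrow> ('s \<Rightarrow> nat) \<Rightarrow> ('s \<Rightarrow> nat \<Rightarrow> nat) \<Rightarrow> bool" where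
  "cyclically_compatible S n m f \<longleftrightarrow>
     compatible S n m f \<and> card {s\<in>S. \<not> {0, n} \<subseteq> f s ` {0..m s}} \<le> 1"

end

(* Morphisms <m> -> <n> of Lambda are the monotone maps F : Z -> Z with
   F (i + m + 1) = F i + n + 1 (the paracyclic maps), taken modulo translation by multiples
   of n + 1. A commutative square in Lambda lifts to a commutative square of paracyclic maps,
   and it is a pullback (pushout) in Lambda exactly when the lift is one among paracyclic maps;
   there, a square is a pullback iff it is a pullback of the underlying sets.

   For such a pullback over a cospan ga, gb, testing the pushout property against maps to <0>
   that cut Z at a chosen point shows: the square is a pushout iff for every j, one of ga, gb
   has a singleton fibre over j and one of them hits both j - 1 and j. For the lifts of f_s and
   f_s' this is the pairwise form of cyclic compatibility, the wrap-around at j = 0 accounting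
   for the condition on {0, n}. Since the legs of a pullback of sets have the same fibres as the
   opposite maps, the condition propagates up the faces of a strongly Cartesian cube, so every
   strongly Cartesian extension is strongly coCartesian. Conversely, a cyclically compatible
   claw has an explicit extension, built from the fibres of the f_s, each of whose faces is a
   pullback of sets. *)

theory Submission
  imports Defs
begin

section \<open>Paracyclic maps and morphisms of \<Lambda>\<close>

definition para_mor :: "nat \<Rightarrow> nat \<Rightarrow> (int \<Rightarrow> int) \<Rightarrow> bool" where
  "para_mor a b F \<longleftrightarrow> mono F \<and> (\<forall>i. F (i + int a + 1) = F i + int b + 1)"

definition translate :: "nat \<Rightarrow> int \<Rightarrow> (int \<Rightarrow> int) \<Rightarrow> int \<Rightarrow> int" where
  "translate b k F = (\<lambda>i. F i + k * (int b + 1))"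

definition lam_of :: "nat \<Rightarrow> (int \<Rightarrow> int) \<Rightarrow> int \<Rightarrow> int" where
  "lam_of b F = translate b (- (F 0 div (int b + 1))) F"

lemma translate_apply [simp]: "translate b k F i = F i + k * (int b + 1)"
  by (simp add: translate_def)

lemma lam_hom_iff: "F \<in> lam_hom a b \<longleftrightarrow> para_mor a b F \<and> 0 \<le> F 0 \<and> F 0 \<le> int b"
  by (auto simp: lam_hom_def para_mor_def)

lemma lam_hom_para_mor: "F \<in> lam_hom a b \<Longrightarrow> para_mor a b F"
  by (simp add: lam_hom_iff)

lemma lam_comp_eq: "lam_comp p G F = lam_of p (G \<circ> F)"
  by (simp add: lam_comp_def lam_of_def translate_def fun_eq_iff algebra_simps)

lemma para_mor_mono: "para_mor a b F \<Longrightarrow> i \<le> j \<Longrightarrow> F i \<le> F j"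
  by (auto simp: para_mor_def mono_def)

lemma para_mor_less_imp_less: "para_mor a b F \<Longrightarrow> F k < F k' \<Longrightarrow> k < k'"
  using para_mor_mono[of a b F k' k] by (cases "k' \<le> k") auto

lemma para_mor_period: "para_mor a b F \<Longrightarrow> F (i + int a + 1) = F i + int b + 1"
  by (simp add: para_mor_def)

lemma para_mor_periodic:
  assumes F: "para_mor a b F"
  shows "F (i + k * (int a + 1)) = F i + k * (int b + 1)"
proof -
  have nat_case: "F (j + int l * (int a + 1)) = F j + int l * (int b + 1)" for j l
  proof (induction l arbitrary: j)
    case (Suc l)
    have "F (j + int (Suc l) * (int a + 1)) = F ((j + int l * (int a + 1)) + int a + 1)"
      by (simp add: algebra_simps)
    also have "\<dots> = F (j + int l * (int a + 1)) + int b + 1"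
      by (rule para_mor_period[OF F])
    also have "\<dots> = F j + int (Suc l) * (int b + 1)"
      using Suc by (simp add: algebra_simps)
    finally show ?case .
  qed simp
  show ?thesis
  proof (cases "0 \<le> k")
    case True
    then show ?thesis using nat_case[of i "nat k"] by simp
  next
    case False
    then have "F i = F ((i + k * (int a + 1)) + int (nat (- k)) * (int a + 1))"
      by (simp add: algebra_simps)
    then show ?thesis using nat_case[of "i + k * (int a + 1)" "nat (- k)"] False
      by (simp add: algebra_simps)
  qed
qed

lemma para_mor_comp: "para_mor a b F \<Longrightarrow> para_mor b c G \<Longrightarrow> para_mor a c (G \<circ> F)"
  unfolding para_mor_def mono_def by (auto simp: add.assoc)

lemma para_mor_id: "para_mor a a id"
  by (simp add: para_mor_def mono_def)

lemma para_mor_translate: "para_mor a b F \<Longrightarrow> para_mor a b (translate b k F)"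
  unfolding para_mor_def mono_def by (auto simp: algebra_simps)

lemma para_mor_from_steps:
  assumes step: "\<And>j. u j \<le> u (j + 1)" and period: "\<And>j. u (j + int c + 1) = u j + int x + 1"
  shows "para_mor c x u"
proof -
  have steps: "u j \<le> u (j + int l)" for j l
  proof (induction l)
    case (Suc l)
    have "u j \<le> u (j + int l)" by (rule Suc.IH)
    also have "\<dots> \<le> u (j + int l + 1)" by (rule step)
    also have "u (j + int l + 1) = u (j + int (Suc l))" by (simp add: algebra_simps)
    finally show ?case .
  qed simp
  have "mono u"
  proof (rule monoI)
    fix i i' :: int
    assume "i \<le> i'"
    then show "u i \<le> u i'" using steps[of i "nat (i' - i)"] by simp
  qed
  then show ?thesis unfolding para_mor_def using period by blast
qed

lemma comp_translate: "para_mor b c G \<Longrightarrow> G \<circ> translate b k F = translate c k (G \<circ> F)"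
  using para_mor_periodic[of b c G] by (simp add: fun_eq_iff)

lemma translate_comp: "translate b k F \<circ> H = translate b k (F \<circ> H)"
  by (simp add: fun_eq_iff)

lemma translate_translate [simp]: "translate b k (translate b l F) = translate b (k + l) F"
  by (simp add: fun_eq_iff algebra_simps)

lemma translate_0 [simp]: "translate b 0 F = F"
  by (simp add: fun_eq_iff)

lemma translate_cancel: "translate b k F = translate b l F \<Longrightarrow> k = l"
  by (drule fun_cong[of _ _ 0]) simp

lemma translate_lam_of: "F = translate b (F 0 div (int b + 1)) (lam_of b F)"
  by (simp add: lam_of_def)

lemma lam_of_translate [simp]: "lam_of b (translate b k F) = lam_of b F"
proof -
  have "(F 0 + k * (int b + 1)) div (int b + 1) = F 0 div (int b + 1) + k"
    by simp
  then show ?thesis by (simp add: lam_of_def fun_eq_iff algebra_simps)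
qed

lemma lam_of_lam_hom: "para_mor a b F \<Longrightarrow> lam_of b F \<in> lam_hom a b"
  using pos_mod_sign[of "int b + 1" "F 0"] pos_mod_bound[of "int b + 1" "F 0"]
  by (simp add: lam_hom_iff lam_of_def para_mor_translate minus_div_mult_eq_mod [symmetric])

lemma lam_of_idem: "F \<in> lam_hom a b \<Longrightarrow> lam_of b F = F"
  by (simp add: lam_hom_iff lam_of_def div_pos_pos_trivial)

lemma lam_of_eq_iff: "lam_of b F = lam_of b G \<longleftrightarrow> (\<exists>k. F = translate b k G)"
proof
  assume eq: "lam_of b F = lam_of b G"
  have F: "F = translate b (F 0 div (int b + 1)) (lam_of b F)" by (rule translate_lam_of)
  have G: "lam_of b F = translate b (- (G 0 div (int b + 1))) G"
    unfolding eq by (simp only: lam_of_def)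
  have "F = translate b (F 0 div (int b + 1) + - (G 0 div (int b + 1))) G"
    using F unfolding G translate_translate .
  then show "\<exists>k. F = translate b k G" ..
qed auto

lemma lam_of_comp_right: "para_mor b c G \<Longrightarrow> lam_of c (G \<circ> lam_of b F) = lam_of c (G \<circ> F)"
  unfolding lam_of_def[of b F] by (simp add: comp_translate)

lemma lam_of_comp_left: "lam_of c (lam_of c G \<circ> F) = lam_of c (G \<circ> F)"
  unfolding lam_of_def[of c G] by (simp add: translate_comp)

section \<open>Pullbacks and pushouts in \<Lambda> versus paracyclic maps\<close>

definition para_pullback ::
  "nat \<Rightarrow> nat \<Rightarrow> nat \<Rightarrow> (int \<Rightarrow> int) \<Rightarrow> (int \<Rightarrow> int) \<Rightarrow> (int \<Rightarrow> int) \<Rightarrow> (int \<Rightarrow> int) \<Rightarrow> bool" where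
  "para_pullback P A B pa pb ga gb \<longleftrightarrow>
     (\<forall>X x y. para_mor X A x \<longrightarrow> para_mor X B y \<longrightarrow> ga \<circ> x = gb \<circ> y \<longrightarrow>
        (\<exists>!u. para_mor X P u \<and> pa \<circ> u = x \<and> pb \<circ> u = y))"

definition para_pushout ::
  "nat \<Rightarrow> nat \<Rightarrow> nat \<Rightarrow> (int \<Rightarrow> int) \<Rightarrow> (int \<Rightarrow> int) \<Rightarrow> (int \<Rightarrow> int) \<Rightarrow> (int \<Rightarrow> int) \<Rightarrow> bool" where
  "para_pushout A B C pa pb ga gb \<longleftrightarrow>
     (\<forall>X x y. para_mor A X x \<longrightarrow> para_mor B X y \<longrightarrow> x \<circ> pa = y \<circ> pb \<longrightarrow>
        (\<exists>!u. para_mor C X u \<and> u \<circ> ga = x \<and> u \<circ> gb = y))"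

lemma para_pullback_unique:
  assumes "para_pullback P A B pa pb ga gb" and "ga \<circ> pa = gb \<circ> pb"
    and "para_mor P A pa" and "para_mor P B pb" and "para_mor X P v" and "para_mor X P w"
    and "pa \<circ> v = pa \<circ> w" and "pb \<circ> v = pb \<circ> w"
  shows "v = w"
proof -
  have "ga \<circ> (pa \<circ> v) = gb \<circ> (pb \<circ> v)" by (simp add: assms(2) flip: comp_assoc)
  then have "\<exists>!u. para_mor X P u \<and> pa \<circ> u = pa \<circ> v \<and> pb \<circ> u = pb \<circ> v"
    using assms(1) para_mor_comp[OF assms(5) assms(3)] para_mor_comp[OF assms(5) assms(4)]
    unfolding para_pullback_def by blast
  then show ?thesis using assms(5-8) by (metis the1_equality)
qed

lemma para_pushout_unique:
  assumes "para_pushout A B C pa pb ga gb" and "ga \<circ> pa = gb \<circ> pb"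
    and "para_mor A C ga" and "para_mor B C gb" and "para_mor C X v" and "para_mor C X w"
    and "v \<circ> ga = w \<circ> ga" and "v \<circ> gb = w \<circ> gb"
  shows "v = w"
proof -
  have "(v \<circ> ga) \<circ> pa = (v \<circ> gb) \<circ> pb" by (simp add: assms(2) comp_assoc)
  then have "\<exists>!u. para_mor C X u \<and> u \<circ> ga = v \<circ> ga \<and> u \<circ> gb = v \<circ> gb"
    using assms(1) para_mor_comp[OF assms(3) assms(5)] para_mor_comp[OF assms(4) assms(5)]
    unfolding para_pushout_def by blast
  then show ?thesis using assms(5-8) by (metis the1_equality)
qed

lemma lam_of_cospan_eq:
  assumes ga: "para_mor A C ga" and gb: "para_mor B C gb"
    and c: "ga \<circ> x = gb \<circ> y" and c': "ga \<circ> x' = gb \<circ> y'"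
    and "lam_of A x = lam_of A x'" and "lam_of B y = lam_of B y'"
  obtains k where "x = translate A k x'" and "y = translate B k y'"
proof -
  obtain k l where x: "x = translate A k x'" and y: "y = translate B l y'"
    using assms(5,6) by (auto simp: lam_of_eq_iff)
  have "translate C k (gb \<circ> y') = translate C l (gb \<circ> y')"
    using c unfolding x y comp_translate[OF ga] comp_translate[OF gb] c' .
  then show ?thesis using that x y translate_cancel by metis
qed

lemma lam_of_span_eq:
  fixes pa pb :: "int \<Rightarrow> int"
  assumes c: "x \<circ> pa = y \<circ> pb" and c': "x' \<circ> pa = y' \<circ> pb"
    and "lam_of X x = lam_of X x'" and "lam_of X y = lam_of X y'"
  obtains k where "x = translate X k x'" and "y = translate X k y'"
proof -
  obtain k l where x: "x = translate X k x'" and y: "y = translate X l y'"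
    using assms(3,4) by (auto simp: lam_of_eq_iff)
  have "translate X k (y' \<circ> pb) = translate X l (y' \<circ> pb)"
    using c unfolding x y translate_comp c' .
  then show ?thesis using that x y translate_cancel by metis
qed

lemma eq_if_lam_of_eq_comp_left:
  assumes "para_mor P A pa" and "lam_of P v = lam_of P w" and "pa \<circ> v = pa \<circ> w"
  shows "v = w"
proof -
  obtain k where v: "v = translate P k w" using assms(2) by (auto simp: lam_of_eq_iff)
  then have "translate A k (pa \<circ> w) = translate A 0 (pa \<circ> w)"
    using assms(3) by (simp add: comp_translate[OF assms(1)])
  then show ?thesis using v translate_cancel by fastforce
qed

lemma eq_if_lam_of_eq_comp_right:
  fixes ga :: "int \<Rightarrow> int"
  assumes "lam_of X v = lam_of X w" and "v \<circ> ga = w \<circ> ga"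
  shows "v = w"
proof -
  obtain k where v: "v = translate X k w" using assms(1) by (auto simp: lam_of_eq_iff)
  then have "translate X k (w \<circ> ga) = translate X 0 (w \<circ> ga)"
    using assms(2) by (simp add: translate_comp)
  then show ?thesis using v translate_cancel by fastforce
qed

lemma lam_comp_lam_of_lam_of:
  "para_mor b c G \<Longrightarrow> lam_comp c (lam_of c G) (lam_of b F) = lam_of c (G \<circ> F)"
  by (simp add: lam_comp_eq lam_of_comp_left lam_of_comp_right)

lemma lam_comp_lam_of_right:
  "para_mor b c G \<Longrightarrow> lam_comp c G (lam_of b F) = lam_of c (G \<circ> F)"
  by (simp add: lam_comp_eq lam_of_comp_right)

lemma lam_comp_lam_of_left: "lam_comp c (lam_of c G) F = lam_of c (G \<circ> F)"
  by (simp add: lam_comp_eq lam_of_comp_left)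

lemma lam_comp_lam_of_legs:
  assumes "para_mor P A pa" and "para_mor P B pb"
  shows "lam_comp A pa (lam_of P u) = lam_of A (pa \<circ> u)"
    and "lam_comp B (lam_of B pb) (lam_of P u) = lam_of B (pb \<circ> u)"
  by (simp_all add: lam_comp_lam_of_right lam_comp_lam_of_lam_of assms)

lemma para_pullback_if_lam_pullback:
  assumes LP: "lam_pullback P A B C pa (lam_of B pb) ga gb" and pb: "para_mor P B pb"
    and E: "ga \<circ> pa = gb \<circ> pb"
  shows "para_pullback P A B pa pb ga gb"
  unfolding para_pullback_def
proof (intro allI impI)
  have pa: "para_mor P A pa" and ga: "para_mor A C ga" and gb: "para_mor B C gb"
    using LP by (auto simp: lam_pullback_def lam_hom_iff)
  have U: "\<And>X x y. x \<in> lam_hom X A \<Longrightarrow> y \<in> lam_hom X B \<Longrightarrow>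
      lam_comp C ga x = lam_comp C gb y \<Longrightarrow>
      \<exists>!u. u \<in> lam_hom X P \<and> lam_comp A pa u = x \<and> lam_comp B (lam_of B pb) u = y"
    using LP unfolding lam_pullback_def by blast
  fix X x y assume x: "para_mor X A x" and y: "para_mor X B y" and c: "ga \<circ> x = gb \<circ> y"
  have "lam_comp C ga (lam_of A x) = lam_comp C gb (lam_of B y)"
    by (simp add: lam_comp_lam_of_right ga gb c)
  then obtain u0 where u0: "u0 \<in> lam_hom X P" "lam_comp A pa u0 = lam_of A x"
      "lam_comp B (lam_of B pb) u0 = lam_of B y"
    and u0_unique: "\<And>u. u \<in> lam_hom X P \<Longrightarrow> lam_comp A pa u = lam_of A x \<Longrightarrow>
      lam_comp B (lam_of B pb) u = lam_of B y \<Longrightarrow> u = u0"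
    using U[OF lam_of_lam_hom[OF x] lam_of_lam_hom[OF y]] by blast
  have to_u0: "lam_of P w = u0" if "para_mor X P w" "pa \<circ> w = x" "pb \<circ> w = y" for w
    by (rule u0_unique) (simp_all add: lam_of_lam_hom lam_comp_lam_of_legs[OF pa pb] that)
  have legs: "lam_of A (pa \<circ> u0) = lam_of A x" "lam_of B (pb \<circ> u0) = lam_of B y"
    using u0 lam_comp_lam_of_legs[OF pa pb, of u0] by (simp_all add: lam_of_idem)
  obtain k where k: "pa \<circ> u0 = translate A k x" "pb \<circ> u0 = translate B k y"
    by (rule lam_of_cospan_eq[OF ga gb _ c legs]) (simp add: E flip: comp_assoc)
  define u where "u = translate P (- k) u0"
  have u: "para_mor X P u" "pa \<circ> u = x" "pb \<circ> u = y"
    using k lam_hom_para_mor[OF u0(1)]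
    by (simp_all add: u_def para_mor_translate comp_translate[OF pa] comp_translate[OF pb])
  show "\<exists>!u. para_mor X P u \<and> pa \<circ> u = x \<and> pb \<circ> u = y"
  proof (rule ex1I[of _ u])
    fix v assume v: "para_mor X P v \<and> pa \<circ> v = x \<and> pb \<circ> v = y"
    then have "lam_of P v = lam_of P u" using to_u0 u by simp
    then show "v = u" using eq_if_lam_of_eq_comp_left[OF pa] v u(2) by simp
  qed (use u in blast)
qed

lemma eq_lam_of_if_para_pullback:
  assumes Z: "para_pullback P A B pa pb ga gb" and E: "ga \<circ> pa = gb \<circ> pb"
    and pa: "para_mor P A pa" and pb: "para_mor P B pb"
    and ga: "para_mor A C ga" and gb: "para_mor B C gb"
    and v: "v \<in> lam_hom X P" and u: "para_mor X P u"
    and "lam_of A (pa \<circ> v) = lam_of A (pa \<circ> u)" and "lam_of B (pb \<circ> v) = lam_of B (pb \<circ> u)"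
  shows "v = lam_of P u"
proof -
  have "ga \<circ> (pa \<circ> v) = gb \<circ> (pb \<circ> v)" "ga \<circ> (pa \<circ> u) = gb \<circ> (pb \<circ> u)"
    by (simp_all add: E flip: comp_assoc)
  then obtain k where "pa \<circ> v = translate A k (pa \<circ> u)" "pb \<circ> v = translate B k (pb \<circ> u)"
    by (rule lam_of_cospan_eq[OF ga gb _ _ assms(9,10)])
  then have "pa \<circ> v = pa \<circ> translate P k u" "pb \<circ> v = pb \<circ> translate P k u"
    unfolding comp_translate[OF pa] comp_translate[OF pb] .
  then have "v = translate P k u"
    using para_pullback_unique[OF Z E pa pb] lam_hom_para_mor[OF v] para_mor_translate[OF u] by blast
  then show ?thesis using lam_of_idem[OF v] by simp
qed

lemma eq_lam_of_if_para_pushout: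
  assumes Z: "para_pushout A B C pa pb ga gb" and E: "ga \<circ> pa = gb \<circ> pb"
    and ga: "para_mor A C ga" and gb: "para_mor B C gb"
    and v: "v \<in> lam_hom C X" and u: "para_mor C X u"
    and "lam_of X (v \<circ> ga) = lam_of X (u \<circ> ga)" and "lam_of X (v \<circ> gb) = lam_of X (u \<circ> gb)"
  shows "v = lam_of X u"
proof -
  have "v \<circ> ga \<circ> pa = v \<circ> gb \<circ> pb" "u \<circ> ga \<circ> pa = u \<circ> gb \<circ> pb"
    by (simp_all add: E comp_assoc)
  then obtain k where "v \<circ> ga = translate X k (u \<circ> ga)" "v \<circ> gb = translate X k (u \<circ> gb)"
    by (rule lam_of_span_eq[OF _ _ assms(7,8)])
  then have "v \<circ> ga = translate X k u \<circ> ga" "v \<circ> gb = translate X k u \<circ> gb"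
    unfolding translate_comp .
  then have "v = translate X k u"
    using para_pushout_unique[OF Z E ga gb] lam_hom_para_mor[OF v] para_mor_translate[OF u] by blast
  then show ?thesis using lam_of_idem[OF v] by simp
qed

lemma lam_pullback_if_para_pullback:
  assumes Z: "para_pullback P A B pa pb ga gb" and E: "ga \<circ> pa = gb \<circ> pb"
    and pa: "pa \<in> lam_hom P A" and pb: "para_mor P B pb"
    and ga: "ga \<in> lam_hom A C" and gb: "gb \<in> lam_hom B C"
  shows "lam_pullback P A B C pa (lam_of B pb) ga gb"
proof -
  have pa': "para_mor P A pa" and ga': "para_mor A C ga" and gb': "para_mor B C gb"
    using pa ga gb by (simp_all add: lam_hom_para_mor)
  note legs = lam_comp_lam_of_legs[OF pa' pb]
  have U: "\<exists>!u. u \<in> lam_hom X P \<and> lam_comp A pa u = x \<and> lam_comp B (lam_of B pb) u = y"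
    if x: "x \<in> lam_hom X A" and y: "y \<in> lam_hom X B" and c: "lam_comp C ga x = lam_comp C gb y"
    for X x y
  proof -
    obtain e where "ga \<circ> x = translate C e (gb \<circ> y)"
      using c by (auto simp: lam_comp_eq lam_of_eq_iff)
    then have "ga \<circ> x = gb \<circ> translate B e y" by (simp add: comp_translate[OF gb'])
    then obtain u where u: "para_mor X P u" "pa \<circ> u = x" "pb \<circ> u = translate B e y"
      using Z lam_hom_para_mor[OF x] para_mor_translate[OF lam_hom_para_mor[OF y]]
      unfolding para_pullback_def by blast
    have u_legs: "lam_of A (pa \<circ> u) = x" "lam_of B (pb \<circ> u) = y"
      using u by (simp_all add: lam_of_idem[OF x] lam_of_idem[OF y])
    show ?thesis
    proof (rule ex1I[of _ "lam_of P u"])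
      fix v assume v: "v \<in> lam_hom X P \<and> lam_comp A pa v = x \<and> lam_comp B (lam_of B pb) v = y"
      then have v_legs: "lam_of A (pa \<circ> v) = x" "lam_of B (pb \<circ> v) = y"
        using legs[of v] lam_of_idem[of v X P] by simp_all
      show "v = lam_of P u"
        by (rule eq_lam_of_if_para_pullback[OF Z E pa' pb ga' gb' _ u(1)])
          (use v v_legs u_legs in simp_all)
    qed (use lam_of_lam_hom[OF u(1)] legs u_legs in auto)
  qed
  have "lam_comp C ga pa = lam_comp C gb (lam_of B pb)"
    by (simp add: lam_comp_eq lam_of_comp_right[OF gb'] E)
  then show ?thesis
    unfolding lam_pullback_def using pa ga gb lam_of_lam_hom[OF pb] U by blast
qed

lemma para_pushout_if_lam_pushout:
  assumes LO: "lam_pushout P A B C pa (lam_of B pb) ga gb" and pb: "para_mor P B pb"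
    and E: "ga \<circ> pa = gb \<circ> pb"
  shows "para_pushout A B C pa pb ga gb"
  unfolding para_pushout_def
proof (intro allI impI)
  have ga: "para_mor A C ga" and gb: "para_mor B C gb"
    using LO by (auto simp: lam_pushout_def lam_hom_iff)
  have U: "\<And>X x y. x \<in> lam_hom A X \<Longrightarrow> y \<in> lam_hom B X \<Longrightarrow>
      lam_comp X x pa = lam_comp X y (lam_of B pb) \<Longrightarrow>
      \<exists>!u. u \<in> lam_hom C X \<and> lam_comp X u ga = x \<and> lam_comp X u gb = y"
    using LO unfolding lam_pushout_def by blast
  fix X x y assume x: "para_mor A X x" and y: "para_mor B X y" and c: "x \<circ> pa = y \<circ> pb"
  have "lam_comp X (lam_of X x) pa = lam_comp X (lam_of X y) (lam_of B pb)"
    by (simp add: lam_comp_lam_of_left lam_of_comp_right[OF y] c)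
  then obtain u0 where u0: "u0 \<in> lam_hom C X" "lam_comp X u0 ga = lam_of X x"
      "lam_comp X u0 gb = lam_of X y"
    and u0_unique: "\<And>u. u \<in> lam_hom C X \<Longrightarrow> lam_comp X u ga = lam_of X x \<Longrightarrow>
      lam_comp X u gb = lam_of X y \<Longrightarrow> u = u0"
    using U[OF lam_of_lam_hom[OF x] lam_of_lam_hom[OF y]] by blast
  have to_u0: "lam_of X w = u0" if "para_mor C X w" "w \<circ> ga = x" "w \<circ> gb = y" for w
    by (rule u0_unique) (simp_all add: lam_of_lam_hom lam_comp_lam_of_left that)
  have legs: "lam_of X (u0 \<circ> ga) = lam_of X x" "lam_of X (u0 \<circ> gb) = lam_of X y"
    using u0 by (simp_all add: lam_comp_eq)
  obtain k where k: "u0 \<circ> ga = translate X k x" "u0 \<circ> gb = translate X k y"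
    by (rule lam_of_span_eq[OF _ c legs]) (simp add: E comp_assoc)
  define u where "u = translate X (- k) u0"
  have u: "para_mor C X u" "u \<circ> ga = x" "u \<circ> gb = y"
    using k lam_hom_para_mor[OF u0(1)] by (simp_all add: u_def para_mor_translate translate_comp)
  show "\<exists>!u. para_mor C X u \<and> u \<circ> ga = x \<and> u \<circ> gb = y"
  proof (rule ex1I[of _ u])
    fix v assume v: "para_mor C X v \<and> v \<circ> ga = x \<and> v \<circ> gb = y"
    then have "lam_of X v = lam_of X u" using to_u0 u by simp
    then show "v = u" by (rule eq_if_lam_of_eq_comp_right[where ga = ga]) (use v u in simp)
  qed (use u in blast)
qed

lemma lam_pushout_if_para_pushout:
  assumes Z: "para_pushout A B C pa pb ga gb" and E: "ga \<circ> pa = gb \<circ> pb"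
    and pa: "pa \<in> lam_hom P A" and pb: "para_mor P B pb"
    and ga: "ga \<in> lam_hom A C" and gb: "gb \<in> lam_hom B C"
  shows "lam_pushout P A B C pa (lam_of B pb) ga gb"
proof -
  have ga': "para_mor A C ga" and gb': "para_mor B C gb"
    using ga gb by (simp_all add: lam_hom_para_mor)
  have U: "\<exists>!u. u \<in> lam_hom C X \<and> lam_comp X u ga = x \<and> lam_comp X u gb = y"
    if x: "x \<in> lam_hom A X" and y: "y \<in> lam_hom B X"
      and c: "lam_comp X x pa = lam_comp X y (lam_of B pb)" for X x y
  proof -
    have "lam_of X (x \<circ> pa) = lam_of X (y \<circ> pb)"
      using c by (simp add: lam_comp_eq lam_of_comp_right lam_hom_para_mor[OF y])
    then obtain e where "x \<circ> pa = translate X e y \<circ> pb"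
      by (auto simp: lam_of_eq_iff translate_comp)
    then obtain u where u: "para_mor C X u" "u \<circ> ga = x" "u \<circ> gb = translate X e y"
      using Z lam_hom_para_mor[OF x] para_mor_translate[OF lam_hom_para_mor[OF y]]
      unfolding para_pushout_def by blast
    have u_legs: "lam_of X (u \<circ> ga) = x" "lam_of X (u \<circ> gb) = y"
      using u by (simp_all add: lam_of_idem[OF x] lam_of_idem[OF y])
    show ?thesis
    proof (rule ex1I[of _ "lam_of X u"])
      fix v assume v: "v \<in> lam_hom C X \<and> lam_comp X v ga = x \<and> lam_comp X v gb = y"
      then have v_legs: "lam_of X (v \<circ> ga) = x" "lam_of X (v \<circ> gb) = y"
        by (simp_all add: lam_comp_eq)
      show "v = lam_of X u"
        by (rule eq_lam_of_if_para_pushout[OF Z E ga' gb' _ u(1)]) (use v v_legs u_legs in simp_all)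
    qed (use lam_of_lam_hom[OF u(1)] u_legs in \<open>auto simp: lam_comp_lam_of_left\<close>)
  qed
  have "lam_comp C ga pa = lam_comp C gb (lam_of B pb)"
    by (simp add: lam_comp_eq lam_of_comp_right[OF gb'] E)
  then show ?thesis
    unfolding lam_pushout_def using pa ga gb lam_of_lam_hom[OF pb] U by blast
qed

lemma lam_square_lift:
  assumes "lam_comp C ga pa = lam_comp C gb pb" and "gb \<in> lam_hom B C" and "pb \<in> lam_hom P B"
  obtains pb' where "para_mor P B pb'" and "lam_of B pb' = pb" and "ga \<circ> pa = gb \<circ> pb'"
proof -
  obtain k where "ga \<circ> pa = translate C k (gb \<circ> pb)"
    using assms(1) by (auto simp: lam_comp_eq lam_of_eq_iff)
  then have "ga \<circ> pa = gb \<circ> translate B k pb"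
    by (simp add: comp_translate[OF lam_hom_para_mor[OF assms(2)]])
  then show ?thesis
    using that[of "translate B k pb"] assms(3)
    by (simp add: para_mor_translate lam_hom_para_mor lam_of_idem)
qed

section \<open>Pullbacks of sets and compatible cospans\<close>

definition set_pullback :: "('p \<Rightarrow> 'a) \<Rightarrow> ('p \<Rightarrow> 'b) \<Rightarrow> ('a \<Rightarrow> 'c) \<Rightarrow> ('b \<Rightarrow> 'c) \<Rightarrow> bool" where
  "set_pullback pa pb ga gb \<longleftrightarrow> ga \<circ> pa = gb \<circ> pb \<and>
     (\<forall>k k'. ga k = gb k' \<longrightarrow> (\<exists>p. pa p = k \<and> pb p = k')) \<and>
     (\<forall>p p'. pa p = pa p' \<longrightarrow> pb p = pb p' \<longrightarrow> p = p')"

lemma para_mor_point: "para_mor 0 a (\<lambda>i. k + i * (int a + 1))"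
  unfolding para_mor_def mono_def
  by (auto simp: algebra_simps intro: mult_right_mono[of _ _ "int a + 1", simplified])

lemma set_pullback_if_para_pullback:
  assumes Z: "para_pullback P A B pa pb ga gb" and E: "ga \<circ> pa = gb \<circ> pb"
    and pa: "para_mor P A pa" and pb: "para_mor P B pb"
    and ga: "para_mor A C ga" and gb: "para_mor B C gb"
  shows "set_pullback pa pb ga gb"
  unfolding set_pullback_def
proof (intro conjI allI impI E)
  fix k k' assume h: "ga k = gb k'"
  \<comment> \<open>maps out of \<open>\<langle>0\<rangle>\<close> are single points repeated periodically\<close>
  let ?x = "\<lambda>i. k + i * (int A + 1)" and ?y = "\<lambda>i. k' + i * (int B + 1)"
  have "ga \<circ> ?x = gb \<circ> ?y"
    using h by (simp add: fun_eq_iff para_mor_periodic[OF ga, of k] para_mor_periodic[OF gb, of k'])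
  then have "\<exists>!u. para_mor 0 P u \<and> pa \<circ> u = ?x \<and> pb \<circ> u = ?y"
    using Z para_mor_point unfolding para_pullback_def by blast
  then obtain u where "pa \<circ> u = ?x" "pb \<circ> u = ?y" by blast
  then have "pa (u 0) = k \<and> pb (u 0) = k'" by (metis comp_apply mult_zero_left add_0_right)
  then show "\<exists>p. pa p = k \<and> pb p = k'" ..
next
  fix p p' assume h: "pa p = pa p'" "pb p = pb p'"
  let ?u = "\<lambda>i. p + i * (int P + 1)" and ?u' = "\<lambda>i. p' + i * (int P + 1)"
  have "pa \<circ> ?u = pa \<circ> ?u'" "pb \<circ> ?u = pb \<circ> ?u'"
    using h by (simp_all add: fun_eq_iff para_mor_periodic[OF pa] para_mor_periodic[OF pb])
  then have "?u = ?u'" by (rule para_pullback_unique[OF Z E pa pb para_mor_point para_mor_point])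
  then show "p = p'" by (metis mult_zero_left add_0_right)
qed

lemma para_pullback_if_set_pullback:
  assumes H: "set_pullback pa pb ga gb" and pa: "para_mor P A pa" and pb: "para_mor P B pb"
  shows "para_pullback P A B pa pb ga gb"
  unfolding para_pullback_def
proof (intro allI impI)
  have surj: "\<And>k k'. ga k = gb k' \<Longrightarrow> \<exists>p. pa p = k \<and> pb p = k'"
    and inj: "\<And>p p'. pa p = pa p' \<Longrightarrow> pb p = pb p' \<Longrightarrow> p = p'"
    using H unfolding set_pullback_def by blast+
  fix X x y assume x: "para_mor X A x" and y: "para_mor X B y" and c: "ga \<circ> x = gb \<circ> y"
  define u where "u = (\<lambda>i. SOME p. pa p = x i \<and> pb p = y i)"
  have u: "pa (u i) = x i \<and> pb (u i) = y i" for i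
    unfolding u_def by (rule someI_ex) (use surj c in \<open>metis comp_apply\<close>)
  have period: "u (i + int X + 1) = u i + int P + 1" for i
    by (rule inj) (use u para_mor_period[OF pa] para_mor_period[OF x] para_mor_period[OF pb]
        para_mor_period[OF y] in metis)+
  have "mono u"
  proof (rule monoI, rule ccontr)
    fix i i' :: int assume "i \<le> i'" and "\<not> u i \<le> u i'"
    then have "pa (u i') \<le> pa (u i)" "pb (u i') \<le> pb (u i)" "x i \<le> x i'" "y i \<le> y i'"
      using para_mor_mono[OF pa] para_mor_mono[OF pb] para_mor_mono[OF x] para_mor_mono[OF y]
      by auto
    then have "u i = u i'" using u inj by (metis order_antisym)
    then show False using \<open>\<not> u i \<le> u i'\<close> by simp
  qed
  then have "para_mor X P u \<and> pa \<circ> u = x \<and> pb \<circ> u = y"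
    using period u by (auto simp: para_mor_def fun_eq_iff)
  moreover have "v = w" if "pa \<circ> v = x" "pb \<circ> v = y" "pa \<circ> w = x" "pb \<circ> w = y" for v w
    using that inj by (auto simp: fun_eq_iff)
  ultimately show "\<exists>!u. para_mor X P u \<and> pa \<circ> u = x \<and> pb \<circ> u = y" by blast
qed

definition para_compatible :: "('a \<Rightarrow> int) \<Rightarrow> ('b \<Rightarrow> int) \<Rightarrow> bool" where
  "para_compatible ga gb \<longleftrightarrow> (\<forall>j. ((\<exists>!k. ga k = j) \<or> (\<exists>!k. gb k = j)) \<and>
     ({j - 1, j} \<subseteq> range ga \<or> {j - 1, j} \<subseteq> range gb))"

lemma para_compatibleD:
  assumes "para_compatible ga gb"
  shows "(\<exists>!k. ga k = j) \<or> (\<exists>!k. gb k = j)"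
    and "{j - 1, j} \<subseteq> range ga \<or> {j - 1, j} \<subseteq> range gb"
  using assms by (simp_all add: para_compatible_def)

lemma para_mor_range_periodic:
  assumes g: "para_mor a b g"
  shows "j + t * (int b + 1) \<in> range g \<longleftrightarrow> j \<in> range g"
proof
  assume "j + t * (int b + 1) \<in> range g"
  then obtain l where "g l = j + t * (int b + 1)" by auto
  then have "g (l + (- t) * (int a + 1)) = j" using para_mor_periodic[OF g, of l "- t"] by simp
  then show "j \<in> range g" by (metis rangeI)
next
  assume "j \<in> range g"
  then obtain l where "g l = j" by auto
  then have "g (l + t * (int a + 1)) = j + t * (int b + 1)" using para_mor_periodic[OF g] by simp
  then show "j + t * (int b + 1) \<in> range g" by (metis rangeI)
qed

lemma para_mor_double_value:
  assumes g: "para_mor a b g" and "j \<in> range g" and "\<not> (\<exists>!k. g k = j)"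
  obtains k where "g k = j" and "g (k + 1) = j"
proof -
  obtain k where k: "g k = j" using assms(2) by auto
  with assms(3) obtain k' where k': "g k' = j" "k' \<noteq> k" by blast
  have "g (min k k') \<le> g (min k k' + 1)" "g (min k k' + 1) \<le> g (max k k')"
    using k'(2) by (auto intro: para_mor_mono[OF g])
  moreover have "g (min k k') = j" "g (max k k') = j" using k k'(1) by (simp_all add: min_def max_def)
  ultimately show ?thesis using that[of "min k k'"] by simp
qed

lemma para_mor_cut: "para_mor a 0 (\<lambda>l. (l - c) div (int a + 1))"
proof -
  have "(i + int a + 1 - c) div (int a + 1) = (i - c) div (int a + 1) + 1" for i
    using div_mult_self1[of "int a + 1" "i - c" 1] by (simp add: algebra_simps)
  then show ?thesis unfolding para_mor_def mono_def by (auto intro: zdiv_mono1)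
qed

lemma div_succ_eq:
  fixes a M :: int
  assumes M: "0 < M" and nd: "\<not> M dvd (a + 1)"
  shows "(a + 1) div M = a div M"
proof (rule int_div_pos_eq[where r = "a mod M + 1"])
  have "a mod M + 1 \<noteq> M"
  proof
    assume "a mod M + 1 = M"
    then have "a + 1 = M * (a div M) + M" using mult_div_mod_eq[of M a] by linarith
    then have "a + 1 = M * (a div M + 1)" by (simp add: algebra_simps)
    then show False using nd by simp
  qed
  then show "a mod M + 1 < M" using pos_mod_bound[OF M, of a] by linarith
qed (use M in \<open>simp_all add: algebra_simps\<close>)

lemma para_mor_not_dvd_off_range:
  assumes g: "para_mor a b g" and "c \<notin> range g" and "i \<in> range g"
  shows "\<not> (int b + 1) dvd (i - c)"
proof
  assume "(int b + 1) dvd (i - c)"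
  then obtain t where "i - c = (int b + 1) * t" by (rule dvdE)
  then have "i = c + t * (int b + 1)" by (simp add: algebra_simps)
  then show False using assms para_mor_range_periodic[OF g] by auto
qed

lemma para_pushout_sym:
  assumes "para_pushout A B C pa pb ga gb"
  shows "para_pushout B A C pb pa gb ga"
  unfolding para_pushout_def
proof (intro allI impI)
  fix X x y assume "para_mor B X x" "para_mor A X y" "x \<circ> pb = y \<circ> pa"
  then have "\<exists>!u. para_mor C X u \<and> u \<circ> ga = y \<and> u \<circ> gb = x"
    using assms unfolding para_pushout_def by simp
  then show "\<exists>!u. para_mor C X u \<and> u \<circ> gb = x \<and> u \<circ> ga = y"
    by (simp add: conj_commute conj_left_commute)
qed

lemma para_pushout_jointly_surjective:
  assumes Z: "para_pushout A B C pa pb ga gb" and E: "ga \<circ> pa = gb \<circ> pb"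
    and ga: "para_mor A C ga" and gb: "para_mor B C gb"
  shows "j \<in> range ga \<or> j \<in> range gb"
proof (rule ccontr)
  define M where "M = int C + 1"
  assume miss: "\<not> (j \<in> range ga \<or> j \<in> range gb)"
  have off: "\<not> M dvd (i - j)" if "i \<in> range ga \<or> i \<in> range gb" for i
    using that miss para_mor_not_dvd_off_range[OF ga] para_mor_not_dvd_off_range[OF gb]
    unfolding M_def by blast
  define u where "u = (\<lambda>i. if M dvd (i - j) then i + 1 else i)"
  have period: "M dvd (i + int C + 1 - j) \<longleftrightarrow> M dvd (i - j)" for i
    using dvd_add_right_iff[of M M "i - j"] by (simp add: M_def algebra_simps)
  have "para_mor C C u"
    unfolding para_mor_def mono_def
  proof (intro conjI allI impI)
    fix i i' :: int assume "i \<le> i'"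
    then show "u i \<le> u i'" unfolding u_def by (cases "i = i'") auto
  qed (simp add: u_def period)
  moreover have "u \<circ> ga = id \<circ> ga" "u \<circ> gb = id \<circ> gb"
    using off by (auto simp: u_def fun_eq_iff)
  ultimately have "u = id" by (rule para_pushout_unique[OF Z E ga gb _ para_mor_id])
  then have "u j = j" by simp
  then show False by (simp add: u_def)
qed

lemma para_pushout_no_double_value_off_range:
  assumes Z: "para_pushout A B C pa pb ga gb" and E: "ga \<circ> pa = gb \<circ> pb"
    and ga: "para_mor A C ga" and gb: "para_mor B C gb"
    and miss: "j \<notin> range ga" and k: "gb k = j" "gb (k + 1) = j"
  shows False
proof -
  \<comment> \<open>\<open>y\<close> separates \<open>k\<close> from \<open>k + 1\<close> but agrees with \<open>z \<circ> gb\<close> wherever \<open>ga\<close> is hit too\<close>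
  define y where "y = (\<lambda>l. (l - (k + 1)) div (int B + 1))"
  define z where "z = (\<lambda>i. (i - j) div (int C + 1))"
  have key: "z (gb l) = y l" if "gb l \<in> range ga" for l
  proof -
    define t where "t = y l"
    define r where "r = (l - (k + 1)) mod (int B + 1)"
    have "l = k + 1 + t * (int B + 1) + r"
      using div_mult_mod_eq[of "l - (k + 1)" "int B + 1"] unfolding t_def y_def r_def by simp
    moreover have "0 \<le> r" "r < int B + 1"
      using pos_mod_bound[of "int B + 1" "l - (k + 1)"] unfolding r_def by simp_all
    ultimately have "k + 1 + t * (int B + 1) \<le> l" "l \<le> k + (t + 1) * (int B + 1)"
      by (simp_all add: distrib_right)
    then have "gb (k + 1 + t * (int B + 1)) \<le> gb l" "gb l \<le> gb (k + (t + 1) * (int B + 1))"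
      by (simp_all add: para_mor_mono[OF gb])
    then have "j + t * (int C + 1) \<le> gb l" "gb l \<le> j + (t + 1) * (int C + 1)"
      using k by (simp_all add: para_mor_periodic[OF gb])
    moreover have "gb l \<noteq> j + (t + 1) * (int C + 1)"
      using that miss para_mor_range_periodic[OF ga, of j "t + 1"] by auto
    ultimately show ?thesis
      unfolding z_def t_def[symmetric]
      by (intro int_div_pos_eq[where r = "gb l - j - t * (int C + 1)"]) (auto simp: algebra_simps)
  qed
  have "(z \<circ> ga) \<circ> pa = y \<circ> pb"
  proof
    fix p
    have "ga (pa p) = gb (pb p)" using E by (metis comp_apply)
    then show "((z \<circ> ga) \<circ> pa) p = (y \<circ> pb) p" using key[of "pb p"] by (metis comp_apply rangeI)
  qed
  then have "\<exists>!u. para_mor C 0 u \<and> u \<circ> ga = z \<circ> ga \<and> u \<circ> gb = y"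
    using Z para_mor_comp[OF ga para_mor_cut] para_mor_cut
    unfolding para_pushout_def y_def z_def by blast
  then obtain u where "u \<circ> gb = y" by blast
  then have "y k = y (k + 1)" using k by (metis comp_apply)
  then show False by (simp add: y_def div_eq_minus1)
qed

lemma set_pullback_no_common_double_value:
  assumes H: "set_pullback pa pb ga gb" and pa: "para_mor P A pa" and pb: "para_mor P B pb"
    and k: "ga k = j" "ga (k + 1) = j" and k': "gb k' = j" "gb (k' + 1) = j"
  shows False
proof -
  obtain p where p: "pa p = k + 1" "pb p = k'"
    using H k k' unfolding set_pullback_def by metis
  obtain p' where p': "pa p' = k" "pb p' = k' + 1"
    using H k k' unfolding set_pullback_def by metis
  show False
  proof (cases "p \<le> p'")
    case True
    then show False using para_mor_mono[OF pa True] p p' by simp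
  next
    case False
    then show False using para_mor_mono[OF pb, of p' p] p p' by simp
  qed
qed

lemma para_pushout_no_crossing:
  assumes Z: "para_pushout A B C pa pb ga gb" and E: "ga \<circ> pa = gb \<circ> pb"
    and ga: "para_mor A C ga" and gb: "para_mor B C gb"
    and a: "j - 1 \<notin> range ga" "j \<in> range ga" and b: "j - 1 \<in> range gb" "j \<notin> range gb"
  shows False
proof -
  define M where "M = int C + 1"
  \<comment> \<open>\<open>za\<close> and \<open>zb\<close> differ only at the translates of \<open>j - 1\<close> and \<open>j\<close>\<close>
  define za where "za = (\<lambda>i. (i - (j + 1)) div M)"
  define zb where "zb = (\<lambda>i. (i - (j - 1)) div M)"
  have key: "za i = zb i" if "i \<in> range ga" "i \<in> range gb" for i
  proof -
    have M: "0 < M" by (simp add: M_def)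
    have "\<not> M dvd (i - (j + 1) + 1)" "\<not> M dvd (i - (j + 1) + 1 + 1)"
      using para_mor_not_dvd_off_range[OF gb b(2) that(2)]
        para_mor_not_dvd_off_range[OF ga a(1) that(1)]
      unfolding M_def by (simp_all add: algebra_simps)
    then have "(i - (j + 1) + 1 + 1) div M = (i - (j + 1)) div M"
      using div_succ_eq[OF M] by presburger
    moreover have "i - (j - 1) = i - (j + 1) + 1 + 1" by simp
    ultimately show ?thesis unfolding za_def zb_def by metis
  qed
  have "(za \<circ> ga) \<circ> pa = (zb \<circ> gb) \<circ> pb"
  proof
    fix p
    have "ga (pa p) = gb (pb p)" using E by (metis comp_apply)
    then show "((za \<circ> ga) \<circ> pa) p = ((zb \<circ> gb) \<circ> pb) p" using key by (metis comp_apply rangeI)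
  qed
  then have "\<exists>!u. para_mor C 0 u \<and> u \<circ> ga = za \<circ> ga \<and> u \<circ> gb = zb \<circ> gb"
    using Z para_mor_comp[OF ga para_mor_cut] para_mor_comp[OF gb para_mor_cut]
    unfolding para_pushout_def za_def zb_def M_def by blast
  then obtain u where u: "para_mor C 0 u" "u \<circ> ga = za \<circ> ga" "u \<circ> gb = zb \<circ> gb" by blast
  have "u j = za j" "u (j - 1) = zb (j - 1)"
    using a(2) b(1) u(2,3) by (auto simp: fun_eq_iff)
  moreover have "u (j - 1) \<le> u j" by (rule para_mor_mono[OF u(1)]) simp
  ultimately show False by (simp add: za_def zb_def M_def div_eq_minus1)
qed

lemma single_fibre_if_para_pullback_pushout:
  assumes ZB: "para_pullback P A B pa pb ga gb" and ZO: "para_pushout A B C pa pb ga gb"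
    and E: "ga \<circ> pa = gb \<circ> pb" and pa: "para_mor P A pa" and pb: "para_mor P B pb"
    and ga: "para_mor A C ga" and gb: "para_mor B C gb"
  shows "(\<exists>!k. ga k = j) \<or> (\<exists>!k. gb k = j)"
proof (rule ccontr)
  assume "\<not> ?thesis"
  then have na: "\<not> (\<exists>!k. ga k = j)" and nb: "\<not> (\<exists>!k. gb k = j)" by auto
  have ZO': "para_pushout B A C pb pa gb ga" and E': "gb \<circ> pb = ga \<circ> pa"
    using para_pushout_sym[OF ZO] E by simp_all
  show False
  proof (cases "j \<in> range ga")
    case True
    then obtain k where k: "ga k = j" "ga (k + 1) = j"
      using para_mor_double_value[OF ga _ na] by blast
    show False
    proof (cases "j \<in> range gb")
      case True
      then obtain k' where "gb k' = j" "gb (k' + 1) = j"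
        using para_mor_double_value[OF gb _ nb] by blast
      then show False
        using set_pullback_no_common_double_value[OF set_pullback_if_para_pullback[OF ZB E pa pb ga gb]
            pa pb k] by blast
    next
      case False
      show False using para_pushout_no_double_value_off_range[OF ZO' E' gb ga False k] .
    qed
  next
    case False
    then have "j \<in> range gb" using para_pushout_jointly_surjective[OF ZO E ga gb] by blast
    then obtain k where "gb k = j" "gb (k + 1) = j"
      using para_mor_double_value[OF gb _ nb] by blast
    then show False using para_pushout_no_double_value_off_range[OF ZO E ga gb False] by blast
  qed
qed

lemma range_cover_if_para_pushout:
  assumes Z: "para_pushout A B C pa pb ga gb" and E: "ga \<circ> pa = gb \<circ> pb"
    and ga: "para_mor A C ga" and gb: "para_mor B C gb"
  shows "{j - 1, j} \<subseteq> range ga \<or> {j - 1, j} \<subseteq> range gb"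
proof (rule ccontr)
  assume H: "\<not> ?thesis"
  have j1: "j - 1 \<in> range ga \<or> j - 1 \<in> range gb" and j: "j \<in> range ga \<or> j \<in> range gb"
    using para_pushout_jointly_surjective[OF Z E ga gb] by blast+
  show False
  proof (cases "j \<in> range ga")
    case True
    then have "j - 1 \<notin> range ga" using H by simp
    then have "j - 1 \<in> range gb" using j1 by simp
    then have "j \<notin> range gb" using H by simp
    show False by (rule para_pushout_no_crossing[OF Z E ga gb]) fact+
  next
    case False
    then have "j \<in> range gb" using j by simp
    then have "j - 1 \<notin> range gb" using H by simp
    then have "j - 1 \<in> range ga" using j1 by simp
    show False
      by (rule para_pushout_no_crossing[OF para_pushout_sym[OF Z] _ gb ga])
        (use E False \<open>j \<in> range gb\<close> \<open>j - 1 \<notin> range gb\<close> \<open>j - 1 \<in> range ga\<close> in simp_all)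
  qed
qed

lemma para_compatible_if_pullback_pushout:
  assumes "para_pullback P A B pa pb ga gb" and "para_pushout A B C pa pb ga gb"
    and "ga \<circ> pa = gb \<circ> pb" and "para_mor P A pa" and "para_mor P B pb"
    and "para_mor A C ga" and "para_mor B C gb"
  shows "para_compatible ga gb"
  unfolding para_compatible_def
  using single_fibre_if_para_pullback_pushout[OF assms] range_cover_if_para_pushout[OF assms(2,3,6,7)]
  by blast

lemma para_mor_glue:
  assumes ga: "para_mor A C ga" and gb: "para_mor B C gb"
    and x: "para_mor A X x" and y: "para_mor B X y"
    and ua: "\<And>k. u (ga k) = x k" and ub: "\<And>k. u (gb k) = y k"
    and cover: "\<And>j. {j - 1, j} \<subseteq> range ga \<or> {j - 1, j} \<subseteq> range gb"
  shows "para_mor C X u"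
proof (rule para_mor_from_steps)
  fix j
  have step: "u j \<le> u (j + 1)"
    if g: "para_mor D C g" and h: "para_mor D X h" and uh: "\<And>k. u (g k) = h k"
      and r: "{j, j + 1} \<subseteq> range g" for D g h
  proof -
    obtain k k' where k: "g k = j" "g k' = j + 1" using r by auto
    then have "k \<le> k'" using para_mor_less_imp_less[OF g, of k k'] by simp
    moreover have "u j = h k" "u (j + 1) = h k'" using uh k by metis+
    ultimately show ?thesis using para_mor_mono[OF h] by simp
  qed
  show "u j \<le> u (j + 1)"
    using cover[of "j + 1"] step[OF ga x ua] step[OF gb y ub] by auto
  have period: "u (j + int C + 1) = u j + int X + 1"
    if g: "para_mor D C g" and h: "para_mor D X h" and uh: "\<And>k. u (g k) = h k"
      and r: "j \<in> range g" for D g h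
  proof -
    obtain k where k: "g k = j" using r by auto
    have "u (j + int C + 1) = h (k + int D + 1)" using uh para_mor_period[OF g] k by metis
    then show ?thesis using para_mor_period[OF h] uh k by metis
  qed
  show "u (j + int C + 1) = u j + int X + 1"
    using cover[of j] period[OF ga x ua] period[OF gb y ub] by auto
qed

lemma glued_map_exists:
  assumes single: "\<And>j. (\<exists>!k. ga k = j) \<or> (\<exists>!k. gb k = j)"
    and agree: "\<And>k k'. ga k = gb k' \<Longrightarrow> x k = y k'"
  obtains u where "\<And>k. u (ga k) = x k" and "\<And>k. u (gb k) = y k"
proof
  define u where "u j = (if j \<in> range ga then x (inv ga j) else y (inv gb j))" for j
  show ua: "u (ga k) = x k" for k
  proof -
    have inv: "ga (inv ga (ga k)) = ga k" by (simp add: f_inv_into_f)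
    from single[of "ga k"] have "x (inv ga (ga k)) = x k"
    proof
      assume h: "\<exists>!l. ga l = ga k"
      have "inv ga (ga k) = k" using the1_equality[OF h inv] the1_equality[OF h refl] by simp
      then show ?thesis by simp
    next
      assume "\<exists>!l. gb l = ga k"
      then obtain k' where "gb k' = ga k" by blast
      then show ?thesis using agree inv by metis
    qed
    then show ?thesis by (simp add: u_def)
  qed
  show "u (gb k) = y k" for k
  proof (cases "gb k \<in> range ga")
    case True
    then obtain l where "ga l = gb k" by auto
    then show ?thesis using ua agree by metis
  next
    case False
    then have "\<not> (\<exists>!l. ga l = gb k)" by (metis rangeI)
    then have h: "\<exists>!l. gb l = gb k" using single[of "gb k"] by simp
    have inv: "gb (inv gb (gb k)) = gb k" by (simp add: f_inv_into_f)
    have "inv gb (gb k) = k" using the1_equality[OF h inv] the1_equality[OF h refl] by simp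
    then show ?thesis using False by (simp add: u_def)
  qed
qed

lemma para_pushout_if_compatible:
  assumes ga: "para_mor A C ga" and gb: "para_mor B C gb"
    and surj: "\<And>k k'. ga k = gb k' \<Longrightarrow> \<exists>p. pa p = k \<and> pb p = k'"
    and zc: "para_compatible ga gb"
  shows "para_pushout A B C pa pb ga gb"
  unfolding para_pushout_def
proof (intro allI impI)
  note cover = para_compatibleD(2)[OF zc]
  fix X x y assume x: "para_mor A X x" and y: "para_mor B X y" and c: "x \<circ> pa = y \<circ> pb"
  have "x k = y k'" if "ga k = gb k'" for k k'
    using surj[OF that] c by (metis comp_apply)
  then obtain u where ua: "\<And>k. u (ga k) = x k" and ub: "\<And>k. u (gb k) = y k"
    using glued_map_exists[OF para_compatibleD(1)[OF zc]] by blast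
  show "\<exists>!u. para_mor C X u \<and> u \<circ> ga = x \<and> u \<circ> gb = y"
  proof (rule ex1I[of _ u])
    show "para_mor C X u \<and> u \<circ> ga = x \<and> u \<circ> gb = y"
      using para_mor_glue[OF ga gb x y ua ub cover] ua ub by (simp add: fun_eq_iff)
  next
    fix v assume v: "para_mor C X v \<and> v \<circ> ga = x \<and> v \<circ> gb = y"
    show "v = u"
    proof
      fix j
      have "j \<in> range ga \<or> j \<in> range gb" using cover[of j] by blast
      then show "v j = u j" using v ua ub by (auto simp: fun_eq_iff)
    qed
  qed
qed

lemma set_pullback_range_iff:
  assumes H: "set_pullback pa pb ga gb"
  shows "k \<in> range pa \<longleftrightarrow> ga k \<in> range gb"
proof
  assume "k \<in> range pa"
  then obtain p where "k = pa p" by auto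
  then have "ga k = gb (pb p)" using H unfolding set_pullback_def by (metis comp_apply)
  then show "ga k \<in> range gb" by simp
next
  assume "ga k \<in> range gb"
  then obtain k' where "ga k = gb k'" by auto
  then obtain p where "pa p = k" using H unfolding set_pullback_def by blast
  then show "k \<in> range pa" by auto
qed

lemma set_pullback_single_fibre_iff:
  assumes H: "set_pullback pa pb ga gb"
  shows "(\<exists>!p. pa p = k) \<longleftrightarrow> (\<exists>!k'. gb k' = ga k)"
proof -
  have E: "\<And>p. ga (pa p) = gb (pb p)"
    and surj: "\<And>k k'. ga k = gb k' \<Longrightarrow> \<exists>p. pa p = k \<and> pb p = k'"
    and inj: "\<And>p p'. pa p = pa p' \<Longrightarrow> pb p = pb p' \<Longrightarrow> p = p'"
    using H unfolding set_pullback_def by (metis comp_apply)+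
  show ?thesis
  proof
    assume "\<exists>!p. pa p = k"
    then obtain p0 where p0: "pa p0 = k" and u: "\<And>p. pa p = k \<Longrightarrow> p = p0" by blast
    have "k' = pb p0" if "gb k' = ga k" for k'
      using surj[OF that[symmetric]] u by blast
    moreover have "gb (pb p0) = ga k" using E[of p0] p0 by simp
    ultimately show "\<exists>!k'. gb k' = ga k" by blast
  next
    assume "\<exists>!k'. gb k' = ga k"
    then obtain k0 where k0: "gb k0 = ga k" and u: "\<And>k'. gb k' = ga k \<Longrightarrow> k' = k0" by blast
    obtain p0 where p0: "pa p0 = k" "pb p0 = k0" using surj k0 by metis
    have "p = p0" if "pa p = k" for p
      using inj[of p p0] that p0 u E[of p] by simp
    then show "\<exists>!p. pa p = k" using p0 by blast
  qed
qed

lemma consecutive_values_cover: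
  assumes ga: "para_mor A C ga" and zab: "para_compatible ga gb" and zbc: "para_compatible gb gc"
  shows "{ga (k - 1), ga k} \<subseteq> range gb \<or> {ga (k - 1), ga k} \<subseteq> range gc"
proof (cases "ga k \<le> ga (k - 1) + 1")
  case True
  moreover have "ga (k - 1) \<le> ga k" by (rule para_mor_mono[OF ga]) simp
  ultimately have "ga (k - 1) = ga k - 1 \<or> ga (k - 1) = ga k" by linarith
  then show ?thesis using para_compatibleD(2)[OF zbc, of "ga k"] by auto
next
  case False
  have gap: "i \<notin> range ga" if "ga (k - 1) < i" "i < ga k" for i
  proof
    assume "i \<in> range ga"
    then obtain l where l: "ga l = i" by auto
    show False
    proof (cases "l \<le> k - 1")
      case True
      then show False using para_mor_mono[OF ga True] l that by simp
    next
      case False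
      then show False using para_mor_mono[OF ga, of k l] l that by simp
    qed
  qed
  have "ga (k - 1) + 1 \<notin> range ga" "ga k - 1 \<notin> range ga"
    by (rule gap; use False in linarith)+
  then have "ga (k - 1) \<in> range gb" "ga k \<in> range gb"
    using para_compatibleD(2)[OF zab, of "ga (k - 1) + 1"] para_compatibleD(2)[OF zab, of "ga k"]
    by auto
  then show ?thesis by simp
qed

lemma para_compatible_pullback_legs:
  assumes ga: "para_mor A C ga" and zab: "para_compatible ga gb" and zbc: "para_compatible gb gc"
    and H1: "set_pullback pa pb ga gb" and H2: "set_pullback pa' pc ga gc"
  shows "para_compatible pa pa'"
  unfolding para_compatible_def
proof (intro allI conjI)
  fix k
  show "(\<exists>!p. pa p = k) \<or> (\<exists>!p. pa' p = k)"
    using para_compatibleD(1)[OF zbc, of "ga k"]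
    unfolding set_pullback_single_fibre_iff[OF H1] set_pullback_single_fibre_iff[OF H2] .
  show "{k - 1, k} \<subseteq> range pa \<or> {k - 1, k} \<subseteq> range pa'"
    using consecutive_values_cover[OF ga zab zbc, of k]
    by (simp add: set_pullback_range_iff[OF H1] set_pullback_range_iff[OF H2])
qed

section \<open>The canonical functor \<Delta> \<rightarrow> \<Lambda> and cyclic compatibility\<close>

lemma residue_quotient_unique:
  fixes q q' :: int
  assumes "x \<le> c" and "y \<le> c" and "int x + q * (int c + 1) = int y + q' * (int c + 1)"
  shows "q = q'" and "x = y"
proof -
  have "(q - q') * (int c + 1) = int y - int x" using assms(3) by (simp add: algebra_simps)
  moreover have "\<bar>int y - int x\<bar> < int c + 1" using assms(1,2) by linarith
  ultimately have "\<bar>q - q'\<bar> * (int c + 1) < 1 * (int c + 1)" by (simp add: abs_mult)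
  then have "\<bar>q - q'\<bar> < 1" by (rule mult_right_less_imp_less) simp
  then show "q = q'" by simp
  then show "x = y" using assms(3) by simp
qed

lemma delta_to_lambda_at:
  assumes "r \<le> a"
  shows "delta_to_lambda a b g (int r + q * (int a + 1)) = int (g r) + q * (int b + 1)"
proof -
  have "(int r + q * (int a + 1)) div (int a + 1) = q"
    and "(int r + q * (int a + 1)) mod (int a + 1) = int r"
    using assms by (simp_all add: div_pos_pos_trivial mod_pos_pos_trivial)
  then show ?thesis by (simp add: delta_to_lambda_def algebra_simps)
qed

lemma delta_to_lambda_nat: "r \<le> a \<Longrightarrow> delta_to_lambda a b g (int r) = int (g r)"
  using delta_to_lambda_at[of r a b g 0] by simp

lemma int_residue_split:
  obtains q r where "r \<le> a" and "l = int r + q * (int a + 1)"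
proof
  show "nat (l mod (int a + 1)) \<le> a"
    using pos_mod_bound[of "int a + 1" l] by linarith
  show "l = int (nat (l mod (int a + 1))) + l div (int a + 1) * (int a + 1)"
    using div_mult_mod_eq[of l "int a + 1"] by simp
qed

lemma para_mor_delta_to_lambda:
  assumes g: "delta_mor a b g"
  shows "para_mor a b (delta_to_lambda a b g)"
proof (rule para_mor_from_steps)
  have gb: "\<And>r. r \<le> a \<Longrightarrow> g r \<le> b" and gm: "\<And>r r'. r \<le> r' \<Longrightarrow> r' \<le> a \<Longrightarrow> g r \<le> g r'"
    using g unfolding delta_mor_def by auto
  fix l
  obtain q r where r: "r \<le> a" and l: "l = int r + q * (int a + 1)" by (rule int_residue_split)
  show "delta_to_lambda a b g (l + int a + 1) = delta_to_lambda a b g l + int b + 1"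
    using delta_to_lambda_at[OF r, of b g q] delta_to_lambda_at[OF r, of b g "q + 1"]
    unfolding l by (simp add: algebra_simps)
  show "delta_to_lambda a b g l \<le> delta_to_lambda a b g (l + 1)"
  proof (cases "r = a")
    case True
    have "l + 1 = int 0 + (q + 1) * (int a + 1)" using l True by (simp add: algebra_simps)
    then show ?thesis
      using delta_to_lambda_at[OF r, of b g q] delta_to_lambda_at[of 0 a b g "q + 1"] gb[OF r] l
      by (simp add: algebra_simps)
  next
    case False
    then have r': "Suc r \<le> a" using r by simp
    have l1: "l + 1 = int (Suc r) + q * (int a + 1)" using l by simp
    have "delta_to_lambda a b g (l + 1) = int (g (Suc r)) + q * (int b + 1)"
      unfolding l1 by (rule delta_to_lambda_at[OF r'])
    moreover have "delta_to_lambda a b g l = int (g r) + q * (int b + 1)"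
      using delta_to_lambda_at[OF r] l by simp
    ultimately show ?thesis using gm[OF _ r'] by simp
  qed
qed

lemma delta_to_lambda_lam_hom: "delta_mor a b g \<Longrightarrow> delta_to_lambda a b g \<in> lam_hom a b"
  using para_mor_delta_to_lambda[of a b g] delta_to_lambda_nat[of 0 a b g]
  by (simp add: lam_hom_iff delta_mor_def)

lemma delta_to_lambda_eq_nat_iff:
  assumes g: "delta_mor a b g" and i: "i \<le> b"
  shows "delta_to_lambda a b g l = int i \<longleftrightarrow> (\<exists>r\<le>a. l = int r \<and> g r = i)"
proof
  obtain q r where r: "r \<le> a" and l: "l = int r + q * (int a + 1)" by (rule int_residue_split)
  assume "delta_to_lambda a b g l = int i"
  then have "int (g r) + q * (int b + 1) = int i + 0 * (int b + 1)"
    using delta_to_lambda_at[OF r] l by simp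
  moreover have "g r \<le> b" using g r by (simp add: delta_mor_def)
  ultimately have "q = 0" "g r = i" using residue_quotient_unique[OF _ i] by blast+
  then show "\<exists>r\<le>a. l = int r \<and> g r = i" using r l by auto
qed (auto simp: delta_to_lambda_nat)

lemma delta_to_lambda_range:
  assumes g: "delta_mor a b g" and i: "i \<le> b"
  shows "int i + t * (int b + 1) \<in> range (delta_to_lambda a b g) \<longleftrightarrow> i \<in> g ` {0..a}"
proof -
  have "int i \<in> range (delta_to_lambda a b g) \<longleftrightarrow> i \<in> g ` {0..a}"
    using delta_to_lambda_eq_nat_iff[OF g i] by (auto simp: image_iff eq_commute[of "int i"])
  then show ?thesis using para_mor_range_periodic[OF para_mor_delta_to_lambda[OF g]] by simp
qed

lemma ex1_iff_card_eq_1: "(\<exists>!x. P x) \<longleftrightarrow> card {x. P x} = 1"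
proof -
  have "(\<exists>!x. P x) \<longleftrightarrow> (\<exists>x. {x. P x} = {x})"
  proof
    assume "\<exists>!x. P x"
    then obtain x where "P x" "\<And>y. P y \<Longrightarrow> y = x" by blast
    then have "{x. P x} = {x}" by blast
    then show "\<exists>x. {x. P x} = {x}" ..
  next
    assume "\<exists>x. {x. P x} = {x}"
    then obtain x where "{x. P x} = {x}" ..
    then have "P x" "\<And>y. P y \<Longrightarrow> y = x" by (simp_all add: set_eq_iff)
    then show "\<exists>!x. P x" by blast
  qed
  then show ?thesis by (simp add: card_1_singleton_iff)
qed

lemma ex1_translate_int: "(\<exists>!k::int. P (k + c)) \<longleftrightarrow> (\<exists>!k. P k)"
proof
  assume "\<exists>!k. P (k + c)"
  then obtain k where k: "P (k + c)" and u: "\<And>l. P (l + c) \<Longrightarrow> l = k" by blast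
  show "\<exists>!k. P k"
  proof (rule ex1I[of _ "k + c"])
    fix l assume "P l"
    then have "P ((l - c) + c)" by simp
    then show "l = k + c" using u by fastforce
  qed (rule k)
next
  assume "\<exists>!k. P k"
  then obtain k where k: "P k" and u: "\<And>l. P l \<Longrightarrow> l = k" by blast
  show "\<exists>!k. P (k + c)"
  proof (rule ex1I[of _ "k - c"])
    fix l assume "P (l + c)"
    then show "l = k - c" using u by fastforce
  qed (simp add: k)
qed

lemma para_mor_single_fibre_periodic:
  assumes g: "para_mor a b g"
  shows "(\<exists>!k. g k = j + t * (int b + 1)) \<longleftrightarrow> (\<exists>!k. g k = j)"
proof -
  have "g k = j + t * (int b + 1) \<longleftrightarrow> g (k + (- t) * (int a + 1)) = j" for k
    using para_mor_periodic[OF g, of k "- t"] by auto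
  then show ?thesis using ex1_translate_int[where P = "\<lambda>k. g k = j" and c = "- t * (int a + 1)"]
    by simp
qed

definition fibre_card :: "nat \<Rightarrow> (nat \<Rightarrow> nat) \<Rightarrow> nat \<Rightarrow> nat" where
  "fibre_card a g i = card {r. r \<le> a \<and> g r = i}"

lemma delta_to_lambda_single_fibre:
  assumes g: "delta_mor a b g" and i: "i \<le> b"
  shows "(\<exists>!k. delta_to_lambda a b g k = int i + t * (int b + 1)) \<longleftrightarrow> fibre_card a g i = 1"
proof -
  have "{k. delta_to_lambda a b g k = int i} = int ` {r. r \<le> a \<and> g r = i}"
    using delta_to_lambda_eq_nat_iff[OF g i] by auto
  then have "card {k. delta_to_lambda a b g k = int i} = fibre_card a g i"
    unfolding fibre_card_def by (simp add: card_image)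
  then show ?thesis
    by (simp add: para_mor_single_fibre_periodic[OF para_mor_delta_to_lambda[OF g]] ex1_iff_card_eq_1)
qed

definition pair_compatible :: "nat \<Rightarrow> nat \<Rightarrow> (nat \<Rightarrow> nat) \<Rightarrow> nat \<Rightarrow> (nat \<Rightarrow> nat) \<Rightarrow> bool" where
  "pair_compatible n a g a' g' \<longleftrightarrow>
     (\<forall>i\<le>n. fibre_card a g i = 1 \<or> fibre_card a' g' i = 1) \<and>
     (\<forall>i. 0 < i \<and> i \<le> n \<longrightarrow> {i - 1, i} \<subseteq> g ` {0..a} \<or> {i - 1, i} \<subseteq> g' ` {0..a'}) \<and>
     ({0, n} \<subseteq> g ` {0..a} \<or> {0, n} \<subseteq> g' ` {0..a'})"

lemma all_int_residue_iff: "(\<forall>j::int. P j) \<longleftrightarrow> (\<forall>i\<le>n. \<forall>t. P (int i + t * (int n + 1)))"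
  by (metis int_residue_split)

definition cyclic_pred :: "nat \<Rightarrow> nat \<Rightarrow> nat" where
  "cyclic_pred n i = (if i = 0 then n else i - 1)"

lemma pair_compatible_iff_cyclic:
  "pair_compatible n a g a' g' \<longleftrightarrow>
    (\<forall>i\<le>n. (fibre_card a g i = 1 \<or> fibre_card a' g' i = 1) \<and>
      ({cyclic_pred n i, i} \<subseteq> g ` {0..a} \<or> {cyclic_pred n i, i} \<subseteq> g' ` {0..a'}))"
  (is "?pc \<longleftrightarrow> (\<forall>i\<le>n. ?fib i \<and> ?cov i)")
proof
  assume pc: ?pc
  show "\<forall>i\<le>n. ?fib i \<and> ?cov i"
  proof (intro allI impI conjI)
    fix i assume i: "i \<le> n"
    show "?fib i" using pc i unfolding pair_compatible_def by blast
    show "?cov i"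
    proof (cases "i = 0")
      case True
      then show ?thesis using pc unfolding pair_compatible_def cyclic_pred_def by (simp add: insert_commute)
    next
      case False
      then have "0 < i \<and> i \<le> n" "cyclic_pred n i = i - 1" using i by (simp_all add: cyclic_pred_def)
      then show ?thesis using pc unfolding pair_compatible_def by presburger
    qed
  qed
next
  assume c: "\<forall>i\<le>n. ?fib i \<and> ?cov i"
  have "?cov i" if "0 < i" "i \<le> n" for i using c that by blast
  then have "{i - 1, i} \<subseteq> g ` {0..a} \<or> {i - 1, i} \<subseteq> g' ` {0..a'}" if "0 < i \<and> i \<le> n" for i
    using that by (auto simp: cyclic_pred_def)
  moreover have "?cov 0" using c by blast
  ultimately show ?pc using c unfolding pair_compatible_def cyclic_pred_def by (simp add: insert_commute)
qed

lemma delta_to_lambda_consecutive_range: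
  fixes t :: int
  assumes g: "delta_mor a n g" and i: "i \<le> n"
  shows "{int i + t * (int n + 1) - 1, int i + t * (int n + 1)} \<subseteq> range (delta_to_lambda a n g) \<longleftrightarrow>
    {cyclic_pred n i, i} \<subseteq> g ` {0..a}"
proof -
  have "cyclic_pred n i \<le> n" using i unfolding cyclic_pred_def by auto
  moreover have "int i + t * (int n + 1) - 1 =
      int (cyclic_pred n i) + (if i = 0 then t - 1 else t) * (int n + 1)"
    by (simp add: cyclic_pred_def algebra_simps)
  ultimately show ?thesis using delta_to_lambda_range[OF g] i by simp
qed

lemma para_compatible_delta_to_lambda_iff:
  assumes g: "delta_mor a n g" and g': "delta_mor a' n g'"
  shows "para_compatible (delta_to_lambda a n g) (delta_to_lambda a' n g') \<longleftrightarrow>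
    pair_compatible n a g a' g'"
proof -
  define P where "P j \<longleftrightarrow>
    ((\<exists>!k. delta_to_lambda a n g k = j) \<or> (\<exists>!k. delta_to_lambda a' n g' k = j)) \<and>
    ({j - 1, j} \<subseteq> range (delta_to_lambda a n g) \<or> {j - 1, j} \<subseteq> range (delta_to_lambda a' n g'))"
    for j
  have "para_compatible (delta_to_lambda a n g) (delta_to_lambda a' n g') \<longleftrightarrow> (\<forall>j. P j)"
    unfolding para_compatible_def P_def ..
  also have "\<dots> \<longleftrightarrow> (\<forall>i\<le>n. \<forall>t. P (int i + t * (int n + 1)))"
    by (rule all_int_residue_iff)
  also have "\<dots> \<longleftrightarrow> pair_compatible n a g a' g'"
    unfolding pair_compatible_iff_cyclic P_def
    by (simp add: delta_to_lambda_single_fibre[OF g] delta_to_lambda_single_fibre[OF g']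
        delta_to_lambda_consecutive_range[OF g] delta_to_lambda_consecutive_range[OF g'] del: insert_subset)
  finally show ?thesis .
qed

lemma card_le_1_iff_pairwise:
  assumes "finite S"
  shows "card {s\<in>S. Q s} \<le> 1 \<longleftrightarrow> (\<forall>s\<in>S. \<forall>s'\<in>S. s \<noteq> s' \<longrightarrow> \<not> (Q s \<and> Q s'))"
  using card_le_Suc0_iff_eq[of "{s\<in>S. Q s}"] assms by auto

lemma cyclically_compatible_iff_pairwise:
  assumes S: "finite S"
  shows "cyclically_compatible S n m f \<longleftrightarrow>
    (\<forall>s\<in>S. \<forall>s'\<in>S. s \<noteq> s' \<longrightarrow> pair_compatible n (m s) (f s) (m s') (f s'))"
proof -
  have fibres: "(\<forall>i\<le>n. card {s\<in>S. fibre_card (m s) (f s) i \<noteq> 1} \<le> 1) \<longleftrightarrow>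
      (\<forall>s\<in>S. \<forall>s'\<in>S. s \<noteq> s' \<longrightarrow>
        (\<forall>i\<le>n. fibre_card (m s) (f s) i = 1 \<or> fibre_card (m s') (f s') i = 1))"
    unfolding card_le_1_iff_pairwise[OF S] by blast
  have steps: "(\<forall>i. 0 < i \<and> i \<le> n \<longrightarrow> card {s\<in>S. \<not> {i - 1, i} \<subseteq> f s ` {0..m s}} \<le> 1) \<longleftrightarrow>
      (\<forall>s\<in>S. \<forall>s'\<in>S. s \<noteq> s' \<longrightarrow> (\<forall>i. 0 < i \<and> i \<le> n \<longrightarrow>
        {i - 1, i} \<subseteq> f s ` {0..m s} \<or> {i - 1, i} \<subseteq> f s' ` {0..m s'}))"
    unfolding card_le_1_iff_pairwise[OF S] by blast
  have ends: "card {s\<in>S. \<not> {0, n} \<subseteq> f s ` {0..m s}} \<le> 1 \<longleftrightarrow>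
      (\<forall>s\<in>S. \<forall>s'\<in>S. s \<noteq> s' \<longrightarrow> {0, n} \<subseteq> f s ` {0..m s} \<or> {0, n} \<subseteq> f s' ` {0..m s'})"
    unfolding card_le_1_iff_pairwise[OF S] by blast
  show ?thesis
    unfolding cyclically_compatible_def compatible_def fibre_card_def[symmetric] fibres steps ends
      pair_compatible_def
    by blast
qed

lemma delta_to_lambda_cong:
  assumes "\<And>r. r \<le> a \<Longrightarrow> g r = g' r"
  shows "delta_to_lambda a b g = delta_to_lambda a b g'"
proof
  fix l
  obtain q r where "r \<le> a" and "l = int r + q * (int a + 1)" by (rule int_residue_split)
  then show "delta_to_lambda a b g l = delta_to_lambda a b g' l"
    using assms by (simp add: delta_to_lambda_at)
qed

lemma delta_to_lambda_id: "delta_to_lambda a a (\<lambda>r. r) = id"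
proof
  fix l
  obtain q r where "r \<le> a" and "l = int r + q * (int a + 1)" by (rule int_residue_split)
  then show "delta_to_lambda a a (\<lambda>r. r) l = id l" by (simp add: delta_to_lambda_at)
qed

lemma delta_to_lambda_comp:
  assumes h: "delta_mor a b h" and g: "delta_mor b c g"
  shows "delta_to_lambda b c g \<circ> delta_to_lambda a b h = delta_to_lambda a c (g \<circ> h)"
proof
  fix l
  obtain q r where r: "r \<le> a" and l: "l = int r + q * (int a + 1)" by (rule int_residue_split)
  have "h r \<le> b" using h r by (simp add: delta_mor_def)
  then show "(delta_to_lambda b c g \<circ> delta_to_lambda a b h) l = delta_to_lambda a c (g \<circ> h) l"
    using r unfolding l by (simp add: delta_to_lambda_at)
qed

lemma delta_mor_comp: "delta_mor a b h \<Longrightarrow> delta_mor b c g \<Longrightarrow> delta_mor a c (g \<circ> h)"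
  unfolding delta_mor_def by auto

lemma lam_comp_delta_to_lambda:
  assumes "delta_mor a b h" and "delta_mor b c g"
  shows "lam_comp c (delta_to_lambda b c g) (delta_to_lambda a b h) = delta_to_lambda a c (g \<circ> h)"
  unfolding lam_comp_eq delta_to_lambda_comp[OF assms]
  by (rule lam_of_idem[OF delta_to_lambda_lam_hom[OF delta_mor_comp[OF assms]]])

lemma set_pullback_delta_to_lambda:
  assumes pa: "delta_mor P A pa" and pb: "delta_mor P B pb"
    and ga: "delta_mor A C ga" and gb: "delta_mor B C gb"
    and comm: "\<And>p. p \<le> P \<Longrightarrow> ga (pa p) = gb (pb p)"
    and surj: "\<And>k k'. k \<le> A \<Longrightarrow> k' \<le> B \<Longrightarrow> ga k = gb k' \<Longrightarrow> \<exists>p\<le>P. pa p = k \<and> pb p = k'"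
    and inj: "\<And>p p'. p \<le> P \<Longrightarrow> p' \<le> P \<Longrightarrow> pa p = pa p' \<Longrightarrow> pb p = pb p' \<Longrightarrow> p = p'"
  shows "set_pullback (delta_to_lambda P A pa) (delta_to_lambda P B pb)
    (delta_to_lambda A C ga) (delta_to_lambda B C gb)"
  unfolding set_pullback_def
proof (intro conjI allI impI)
  show "delta_to_lambda A C ga \<circ> delta_to_lambda P A pa = delta_to_lambda B C gb \<circ> delta_to_lambda P B pb"
    unfolding delta_to_lambda_comp[OF pa ga] delta_to_lambda_comp[OF pb gb]
    by (rule delta_to_lambda_cong) (simp add: comm)
next
  fix k k' assume e: "delta_to_lambda A C ga k = delta_to_lambda B C gb k'"
  obtain q r where r: "r \<le> A" and k: "k = int r + q * (int A + 1)" by (rule int_residue_split)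
  obtain q' r' where r': "r' \<le> B" and k': "k' = int r' + q' * (int B + 1)" by (rule int_residue_split)
  have "ga r \<le> C" "gb r' \<le> C" using ga gb r r' by (simp_all add: delta_mor_def)
  moreover have "int (ga r) + q * (int C + 1) = int (gb r') + q' * (int C + 1)"
    using e r r' unfolding k k' by (simp add: delta_to_lambda_at)
  ultimately have "q = q'" "ga r = gb r'" using residue_quotient_unique by blast+
  then obtain p where "p \<le> P" "pa p = r" "pb p = r'" using surj[OF r r'] by blast
  then have "delta_to_lambda P A pa (int p + q * (int P + 1)) = k"
    "delta_to_lambda P B pb (int p + q * (int P + 1)) = k'"
    unfolding k k' \<open>q = q'\<close> by (simp_all add: delta_to_lambda_at)
  then show "\<exists>p. delta_to_lambda P A pa p = k \<and> delta_to_lambda P B pb p = k'" by blast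
next
  fix p p' assume e: "delta_to_lambda P A pa p = delta_to_lambda P A pa p'"
    "delta_to_lambda P B pb p = delta_to_lambda P B pb p'"
  obtain q r where r: "r \<le> P" and p: "p = int r + q * (int P + 1)" by (rule int_residue_split)
  obtain q' r' where r': "r' \<le> P" and p': "p' = int r' + q' * (int P + 1)" by (rule int_residue_split)
  have "pa r \<le> A" "pa r' \<le> A" "pb r \<le> B" "pb r' \<le> B"
    using pa pb r r' by (simp_all add: delta_mor_def)
  moreover have "int (pa r) + q * (int A + 1) = int (pa r') + q' * (int A + 1)"
    "int (pb r) + q * (int B + 1) = int (pb r') + q' * (int B + 1)"
    using e r r' unfolding p p' by (simp_all add: delta_to_lambda_at)
  ultimately have "q = q'" "pa r = pa r'" "pb r = pb r'" using residue_quotient_unique by blast+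
  then show "p = p'" using inj[OF r r'] unfolding p p' by simp
qed

section \<open>Strongly biCartesian extensions are cyclically compatible\<close>

lemma lam_pullback_lift:
  assumes LP: "lam_pullback P A B C pa pb ga gb"
  obtains pb' where "para_mor P B pb'" and "lam_of B pb' = pb" and "ga \<circ> pa = gb \<circ> pb'"
    and "para_pullback P A B pa pb' ga gb" and "set_pullback pa pb' ga gb"
proof -
  have hom: "pa \<in> lam_hom P A" "pb \<in> lam_hom P B" "ga \<in> lam_hom A C" "gb \<in> lam_hom B C"
    and c: "lam_comp C ga pa = lam_comp C gb pb"
    using LP unfolding lam_pullback_def by blast+
  obtain pb' where pb': "para_mor P B pb'" "lam_of B pb' = pb" "ga \<circ> pa = gb \<circ> pb'"
    using lam_square_lift[OF c hom(4,2)] by blast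
  have "para_pullback P A B pa pb' ga gb"
    using para_pullback_if_lam_pullback[of P A B C pa pb' ga gb] LP pb' by simp
  moreover have "set_pullback pa pb' ga gb"
    using set_pullback_if_para_pullback[OF calculation pb'(3) lam_hom_para_mor[OF hom(1)] pb'(1)
        lam_hom_para_mor[OF hom(3)] lam_hom_para_mor[OF hom(4)]] .
  ultimately show ?thesis using that pb' by blast
qed

lemma lam_pushout_if_pullback_compatible:
  assumes LP: "lam_pullback P A B C pa pb ga gb" and zc: "para_compatible ga gb"
  shows "lam_pushout P A B C pa pb ga gb"
proof -
  have hom: "pa \<in> lam_hom P A" "ga \<in> lam_hom A C" "gb \<in> lam_hom B C"
    using LP unfolding lam_pullback_def by blast+
  obtain pb' where pb': "para_mor P B pb'" "lam_of B pb' = pb" "ga \<circ> pa = gb \<circ> pb'"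
    and H: "set_pullback pa pb' ga gb"
    using lam_pullback_lift[OF LP] by blast
  have "\<And>k k'. ga k = gb k' \<Longrightarrow> \<exists>p. pa p = k \<and> pb' p = k'"
    using H unfolding set_pullback_def by blast
  then have "para_pushout A B C pa pb' ga gb"
    using para_pushout_if_compatible[OF lam_hom_para_mor[OF hom(2)] lam_hom_para_mor[OF hom(3)] _ zc]
    by blast
  from lam_pushout_if_para_pushout[OF this pb'(3) hom(1) pb'(1) hom(2,3)]
  show ?thesis unfolding pb'(2) .
qed

lemma para_compatible_if_lam_pullback_pushout:
  assumes LP: "lam_pullback P A B C pa pb ga gb" and LO: "lam_pushout P A B C pa pb ga gb"
  shows "para_compatible ga gb"
proof -
  have hom: "pa \<in> lam_hom P A" "ga \<in> lam_hom A C" "gb \<in> lam_hom B C"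
    using LP unfolding lam_pullback_def by blast+
  obtain pb' where pb': "para_mor P B pb'" "lam_of B pb' = pb" "ga \<circ> pa = gb \<circ> pb'"
    and ZB: "para_pullback P A B pa pb' ga gb"
    using lam_pullback_lift[OF LP] by blast
  have ZO: "para_pushout A B C pa pb' ga gb"
    using para_pushout_if_lam_pushout[of P A B C pa pb' ga gb] LO pb' by simp
  show ?thesis
    by (rule para_compatible_if_pullback_pushout[OF ZB ZO pb'(3) _ pb'(1)])
      (simp_all add: lam_hom_para_mor hom)
qed

lemma strongly_cartesian_para_compatible:
  assumes S: "finite S" and sc: "strongly_cartesian S Qo Qm"
    and base: "\<And>s s'. s \<in> S \<Longrightarrow> s' \<in> S \<Longrightarrow> s \<noteq> s' \<Longrightarrow> para_compatible (Qm {} {s}) (Qm {} {s'})"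
    and T: "T \<subseteq> S"
  shows "\<forall>s\<in>S - T. \<forall>s'\<in>S - T. s \<noteq> s' \<longrightarrow> para_compatible (Qm T (insert s T)) (Qm T (insert s' T))"
  using finite_subset[OF T S] T
proof (induction T rule: finite_subset_induct')
  case empty
  then show ?case using base by simp
next
  case (insert a T)
  show ?case
  proof (intro ballI impI)
    fix s s' assume s: "s \<in> S - insert a T" and s': "s' \<in> S - insert a T" and ne: "s \<noteq> s'"
    have face: "lam_pullback (Qo (insert a (insert t T))) (Qo (insert a T)) (Qo (insert t T)) (Qo T)
        (Qm (insert a T) (insert a (insert t T))) (Qm (insert t T) (insert a (insert t T)))
        (Qm T (insert a T)) (Qm T (insert t T))" if "t \<in> S - insert a T" for t
      using sc insert.hyps that unfolding strongly_cartesian_def by blast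
    obtain pb where H1: "set_pullback (Qm (insert a T) (insert a (insert s T))) pb
        (Qm T (insert a T)) (Qm T (insert s T))"
      using lam_pullback_lift[OF face[OF s]] by blast
    obtain pc where H2: "set_pullback (Qm (insert a T) (insert a (insert s' T))) pc
        (Qm T (insert a T)) (Qm T (insert s' T))"
      using lam_pullback_lift[OF face[OF s']] by blast
    have ga: "para_mor (Qo (insert a T)) (Qo T) (Qm T (insert a T))"
      using face[OF s] unfolding lam_pullback_def by (simp add: lam_hom_para_mor)
    have "para_compatible (Qm T (insert a T)) (Qm T (insert s T))"
      "para_compatible (Qm T (insert s T)) (Qm T (insert s' T))"
      using insert.IH insert.hyps s s' ne by auto
    from para_compatible_pullback_legs[OF ga this H1 H2]
    show "para_compatible (Qm (insert a T) (insert s (insert a T))) (Qm (insert a T) (insert s' (insert a T)))"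
      by (simp add: insert_commute)
  qed
qed

lemma strongly_cocartesian_if_base_compatible:
  assumes S: "finite S" and sc: "strongly_cartesian S Qo Qm"
    and base: "\<And>s s'. s \<in> S \<Longrightarrow> s' \<in> S \<Longrightarrow> s \<noteq> s' \<Longrightarrow> para_compatible (Qm {} {s}) (Qm {} {s'})"
  shows "strongly_cocartesian S Qo Qm"
  unfolding strongly_cocartesian_def
proof (intro allI impI)
  fix T s s' assume h: "T \<subseteq> S \<and> s \<in> S \<and> s' \<in> S \<and> s \<noteq> s' \<and> s \<notin> T \<and> s' \<notin> T"
  then have "para_compatible (Qm T (insert s T)) (Qm T (insert s' T))"
    using strongly_cartesian_para_compatible[OF S sc base] by blast
  moreover have "lam_pullback (Qo (insert s (insert s' T))) (Qo (insert s T)) (Qo (insert s' T)) (Qo T)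
      (Qm (insert s T) (insert s (insert s' T))) (Qm (insert s' T) (insert s (insert s' T)))
      (Qm T (insert s T)) (Qm T (insert s' T))"
    using sc h unfolding strongly_cartesian_def by blast
  ultimately show "lam_pushout (Qo (insert s (insert s' T))) (Qo (insert s T)) (Qo (insert s' T)) (Qo T)
      (Qm (insert s T) (insert s (insert s' T))) (Qm (insert s' T) (insert s (insert s' T)))
      (Qm T (insert s T)) (Qm T (insert s' T))"
    by (intro lam_pushout_if_pullback_compatible)
qed

lemma base_para_compatible_iff:
  assumes ext: "extends_claw S n m f Qo Qm" and dm: "\<forall>s\<in>S. delta_mor (m s) n (f s)"
    and "s \<in> S" and "s' \<in> S"
  shows "para_compatible (Qm {} {s}) (Qm {} {s'}) \<longleftrightarrow> pair_compatible n (m s) (f s) (m s') (f s')"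
  using ext dm assms(3,4) para_compatible_delta_to_lambda_iff[of "m s" n "f s" "m s'" "f s'"]
  unfolding extends_claw_def by simp

lemma cyclically_compatible_if_bicartesian:
  assumes S: "finite S" and dm: "\<forall>s\<in>S. delta_mor (m s) n (f s)"
    and ext: "extends_claw S n m f Qo Qm" and sc: "strongly_cartesian S Qo Qm"
    and co: "strongly_cocartesian S Qo Qm"
  shows "cyclically_compatible S n m f"
  unfolding cyclically_compatible_iff_pairwise[OF S]
proof (intro ballI impI)
  fix s s' assume ss: "s \<in> S" "s' \<in> S" "s \<noteq> s'"
  have "lam_pullback (Qo {s, s'}) (Qo {s}) (Qo {s'}) (Qo {}) (Qm {s} {s, s'}) (Qm {s'} {s, s'})
      (Qm {} {s}) (Qm {} {s'})"
    using sc ss unfolding strongly_cartesian_def by blast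
  moreover have "lam_pushout (Qo {s, s'}) (Qo {s}) (Qo {s'}) (Qo {}) (Qm {s} {s, s'}) (Qm {s'} {s, s'})
      (Qm {} {s}) (Qm {} {s'})"
    using co ss unfolding strongly_cocartesian_def by blast
  ultimately show "pair_compatible n (m s) (f s) (m s') (f s')"
    using para_compatible_if_lam_pullback_pushout base_para_compatible_iff[OF ext dm ss(1,2)] by blast
qed

section \<open>A strongly Cartesian extension of a cyclically compatible claw\<close>

lemma fibre_card_eq_0_iff: "fibre_card a g i = 0 \<longleftrightarrow> i \<notin> g ` {0..a}"
  unfolding fibre_card_def by auto

lemma at_most_one_factor_cases:
  fixes x y z :: nat
  assumes "(y = 1 \<and> z = 1) \<or> (x = 1 \<and> z = 1) \<or> (x = 1 \<and> y = 1)"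
    and "r1 < y * x" and "r2 < z * x" and "min r1 (x - 1) = min r2 (x - 1)"
  shows "max r1 r2 < y * (z * x)" and "min (max r1 r2) (y * x - 1) = r1"
    and "min (max r1 r2) (z * x - 1) = r2"
  using assms by auto

lemma at_most_one_factor_inj:
  fixes x y z :: nat
  assumes "(y = 1 \<and> z = 1) \<or> (x = 1 \<and> z = 1) \<or> (x = 1 \<and> y = 1)"
    and "r < y * (z * x)" and "r' < y * (z * x)"
    and "min r (y * x - 1) = min r' (y * x - 1)" and "min r (z * x - 1) = min r' (z * x - 1)"
  shows "r = r'"
  using assms by auto

locale compatible_claw =
  fixes S :: "'s set" and n :: nat and m :: "'s \<Rightarrow> nat" and f :: "'s \<Rightarrow> nat \<Rightarrow> nat"
  assumes finite_S: "finite S"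
    and delta_mor_f: "\<And>s. s \<in> S \<Longrightarrow> delta_mor (m s) n (f s)"
    and pair_compat: "\<And>s s'. s \<in> S \<Longrightarrow> s' \<in> S \<Longrightarrow> s \<noteq> s' \<Longrightarrow>
      pair_compatible n (m s) (f s) (m s') (f s')"
begin

text \<open>The vertex at \<open>T\<close> is the ordinal sum over \<open>i \<in> [n]\<close> of blocks of size
  \<open>\<Prod>s\<in>T. |f\<^sub>s\<inverse>(i)|\<close>. Since at most one \<open>f\<^sub>s\<close> has a non-singleton fibre over \<open>i\<close>,
  on each block the structure map \<open>collapse T T'\<close> is either the identity or constant.\<close>

definition block_size :: "'s set \<Rightarrow> nat \<Rightarrow> nat" where
  "block_size T i = (\<Prod>s\<in>T. fibre_card (m s) (f s) i)"

definition block_start :: "'s set \<Rightarrow> nat \<Rightarrow> nat" where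
  "block_start T i = (\<Sum>j<i. block_size T j)"

definition vertex_card :: "'s set \<Rightarrow> nat" where
  "vertex_card T = block_start T (Suc n)"

definition cube_obj :: "'s set \<Rightarrow> nat" where
  "cube_obj T = vertex_card T - 1"

definition block_of :: "'s set \<Rightarrow> nat \<Rightarrow> nat" where
  "block_of T r = (LEAST i. r < block_start T (Suc i))"

definition collapse :: "'s set \<Rightarrow> 's set \<Rightarrow> nat \<Rightarrow> nat" where
  "collapse T T' r = block_start T (block_of T' r) +
     min (r - block_start T' (block_of T' r)) (block_size T (block_of T' r) - 1)"

definition cube_mor :: "'s set \<Rightarrow> 's set \<Rightarrow> int \<Rightarrow> int" where
  "cube_mor T T' = delta_to_lambda (cube_obj T') (cube_obj T) (collapse T T')"

lemma f_le: "s \<in> S \<Longrightarrow> j \<le> m s \<Longrightarrow> f s j \<le> n"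
  using delta_mor_f unfolding delta_mor_def by blast

lemma f_mono: "s \<in> S \<Longrightarrow> j \<le> j' \<Longrightarrow> j' \<le> m s \<Longrightarrow> f s j \<le> f s j'"
  using delta_mor_f unfolding delta_mor_def by blast

lemma finite_subset_S: "T \<subseteq> S \<Longrightarrow> finite T"
  by (erule finite_subset[OF _ finite_S])

lemma block_size_eq_0_iff:
  "T \<subseteq> S \<Longrightarrow> block_size T i = 0 \<longleftrightarrow> (\<exists>s\<in>T. i \<notin> f s ` {0..m s})"
  unfolding block_size_def fibre_card_eq_0_iff[symmetric] using finite_subset_S by simp

lemma block_start_Suc: "block_start T (Suc i) = block_start T i + block_size T i"
  unfolding block_start_def by simp

lemma block_start_mono: "i \<le> i' \<Longrightarrow> block_start T i \<le> block_start T i'"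
  unfolding block_start_def by (rule sum_mono2) auto

lemma vertex_card_pos:
  assumes T: "T \<subseteq> S"
  shows "0 < vertex_card T"
proof (rule ccontr)
  assume "\<not> 0 < vertex_card T"
  then have "\<forall>i\<le>n. block_size T i = 0"
    by (simp add: vertex_card_def block_start_def lessThan_Suc_atMost)
  then have miss: "\<forall>i\<le>n. \<exists>t\<in>T. i \<notin> f t ` {0..m t}" using block_size_eq_0_iff[OF T] by blast
  then obtain s where s: "s \<in> T" "0 \<notin> f s ` {0..m s}" by blast
  have "i \<notin> f s ` {0..m s}" if "i \<le> n" for i
    using that
  proof (induction i)
    case (Suc i)
    then obtain t where t: "t \<in> T" "Suc i \<notin> f t ` {0..m t}" using miss by blast
    show ?case
    proof (cases "t = s")
      case False
      then have "pair_compatible n (m s) (f s) (m t) (f t)" using pair_compat s t T by blast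
      then have "{Suc i - 1, Suc i} \<subseteq> f s ` {0..m s} \<or> {Suc i - 1, Suc i} \<subseteq> f t ` {0..m t}"
        using Suc.prems unfolding pair_compatible_def by blast
      then show ?thesis using Suc t by auto
    qed (use t in simp)
  qed (use s in simp)
  moreover have "f s 0 \<le> n" "f s 0 \<in> f s ` {0..m s}" using f_le s T by auto
  ultimately show False by blast
qed

lemma le_cube_obj_iff: "T \<subseteq> S \<Longrightarrow> r \<le> cube_obj T \<longleftrightarrow> r < vertex_card T"
  using vertex_card_pos[of T] unfolding cube_obj_def by arith

lemma block_of_eq:
  assumes "r < block_size T i"
  shows "block_of T (block_start T i + r) = i"
  unfolding block_of_def
proof (rule Least_equality)
  show "block_start T i + r < block_start T (Suc i)" using assms block_start_Suc by simp
next
  fix j assume h: "block_start T i + r < block_start T (Suc j)"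
  show "i \<le> j"
  proof (rule ccontr)
    assume "\<not> i \<le> j"
    then have "block_start T (Suc j) \<le> block_start T i" by (intro block_start_mono) simp
    then show False using h by simp
  qed
qed

lemma block_decompE:
  assumes "p < vertex_card T"
  obtains i r where "i \<le> n" and "r < block_size T i" and "p = block_start T i + r"
proof -
  have n: "p < block_start T (Suc n)" using assms unfolding vertex_card_def .
  define i where "i = block_of T p"
  have "i \<le> n" unfolding i_def block_of_def by (rule Least_le) (rule n)
  moreover have "p < block_start T (Suc i)" unfolding i_def block_of_def by (rule LeastI[of _ n]) (rule n)
  moreover have "block_start T i \<le> p"
  proof (cases i)
    case (Suc j)
    then have "\<not> p < block_start T (Suc j)" unfolding i_def block_of_def by (metis lessI not_less_Least)
    then show ?thesis using Suc by simp
  qed (simp add: block_start_def)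
  ultimately show ?thesis using that[of i "p - block_start T i"] by (simp add: block_start_Suc)
qed

lemma block_start_add_less:
  assumes "i < i'" and "r < block_size T i"
  shows "block_start T i + r < block_start T i'"
proof -
  have "block_start T i + r < block_start T (Suc i)" using assms(2) block_start_Suc by simp
  also have "\<dots> \<le> block_start T i'" using assms(1) by (intro block_start_mono) simp
  finally show ?thesis .
qed

lemma block_start_add_less_vertex_card:
  "i \<le> n \<Longrightarrow> r < block_size T i \<Longrightarrow> block_start T i + r < vertex_card T"
  using block_start_add_less[of i "Suc n" r T] by (simp add: vertex_card_def)

lemma block_size_split:
  assumes "T \<subseteq> T'" and "T' \<subseteq> S"
  shows "block_size T' i = block_size T i * block_size (T' - T) i"
proof -
  have fin: "finite T" "finite (T' - T)" using finite_subset_S assms by auto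
  have "T' = T \<union> (T' - T)" using assms(1) by blast
  then have "block_size T' i = (\<Prod>s\<in>T \<union> (T' - T). fibre_card (m s) (f s) i)"
    unfolding block_size_def by (simp only:)
  also have "\<dots> = block_size T i * block_size (T' - T) i"
    unfolding block_size_def by (rule prod.union_disjoint[OF fin]) blast
  finally show ?thesis .
qed

lemma block_size_subset:
  assumes "T \<subseteq> T'" and "T' \<subseteq> S" and "0 < block_size T' i"
  shows "0 < block_size T i" and "block_size T i \<le> block_size T' i"
  using block_size_split[OF assms(1,2), of i] assms(3) by auto

lemma block_size_insert:
  "T \<subseteq> S \<Longrightarrow> s \<notin> T \<Longrightarrow> block_size (insert s T) i = fibre_card (m s) (f s) i * block_size T i"
  unfolding block_size_def using finite_subset_S by simp

lemma block_start_empty: "block_start {} i = i"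
  unfolding block_start_def block_size_def by simp

lemma cube_obj_empty: "cube_obj {} = n"
  unfolding cube_obj_def vertex_card_def block_start_empty by simp

lemma block_start_single:
  assumes s: "s \<in> S"
  shows "block_start {s} i = card {j. j \<le> m s \<and> f s j < i}"
proof (induction i)
  case (Suc i)
  have "{j. j \<le> m s \<and> f s j < Suc i} = {j. j \<le> m s \<and> f s j < i} \<union> {j. j \<le> m s \<and> f s j = i}"
    by auto
  moreover have "card ({j. j \<le> m s \<and> f s j < i} \<union> {j. j \<le> m s \<and> f s j = i}) =
      card {j. j \<le> m s \<and> f s j < i} + fibre_card (m s) (f s) i"
    unfolding fibre_card_def by (rule card_Un_disjoint) auto
  ultimately show ?case using Suc by (simp add: block_start_Suc block_size_def)
qed (simp add: block_start_def)

lemma cube_obj_single: "s \<in> S \<Longrightarrow> cube_obj {s} = m s"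
proof -
  assume s: "s \<in> S"
  have "{j. j \<le> m s \<and> f s j < Suc n} = {..m s}" using f_le[OF s] by (auto simp: less_Suc_eq_le)
  then show ?thesis unfolding cube_obj_def vertex_card_def block_start_single[OF s] by simp
qed


lemma collapse_block:
  assumes "r < block_size T' i"
  shows "collapse T T' (block_start T' i + r) = block_start T i + min r (block_size T i - 1)"
  unfolding collapse_def block_of_eq[OF assms] by simp

lemma collapse_offset_less:
  assumes "T \<subseteq> T'" and "T' \<subseteq> S" and "r < block_size T' i"
  shows "min r (block_size T i - 1) < block_size T i"
proof -
  have "0 < block_size T i" using block_size_subset(1)[OF assms(1,2)] assms(3) by simp
  then show ?thesis by simp
qed

lemma block_of_collapse:
  assumes "T \<subseteq> T'" and "T' \<subseteq> S" and r: "r < block_size T' i"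
  shows "block_of T (collapse T T' (block_start T' i + r)) = i"
  unfolding collapse_block[OF r] by (rule block_of_eq[OF collapse_offset_less[OF assms]])

lemma collapse_less:
  assumes sub: "T \<subseteq> T'" "T' \<subseteq> S" and p: "p < vertex_card T'"
  shows "collapse T T' p < vertex_card T"
proof -
  obtain i r where i: "i \<le> n" and r: "r < block_size T' i" and p: "p = block_start T' i + r"
    using block_decompE[OF p] .
  show ?thesis unfolding p collapse_block[OF r]
    by (rule block_start_add_less_vertex_card[OF i collapse_offset_less[OF sub r]])
qed

lemma collapse_mono:
  assumes sub: "T \<subseteq> T'" "T' \<subseteq> S" and le: "p1 \<le> p2" and p2: "p2 < vertex_card T'"
  shows "collapse T T' p1 \<le> collapse T T' p2"
proof -
  have "p1 < vertex_card T'" using le p2 by simp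
  then obtain i1 r1 where "i1 \<le> n" and r1: "r1 < block_size T' i1" and p1: "p1 = block_start T' i1 + r1"
    by (rule block_decompE)
  obtain i2 r2 where "i2 \<le> n" and r2: "r2 < block_size T' i2" and p2: "p2 = block_start T' i2 + r2"
    using block_decompE[OF p2] .
  have "\<not> i2 < i1" using block_start_add_less[OF _ r2, of i1] le p1 p2 by auto
  then consider "i1 = i2" | "i1 < i2" by linarith
  then show ?thesis
  proof cases
    case 1
    then show ?thesis using le unfolding p1 p2 collapse_block[OF r1] collapse_block[OF r2] by simp
  next
    case 2
    show ?thesis
      using block_start_add_less[OF 2 collapse_offset_less[OF sub r1]]
      unfolding p1 p2 collapse_block[OF r1] collapse_block[OF r2] by fastforce
  qed
qed

lemma delta_mor_collapse:
  assumes "T \<subseteq> T'" and "T' \<subseteq> S"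
  shows "delta_mor (cube_obj T') (cube_obj T) (collapse T T')"
  unfolding delta_mor_def le_cube_obj_iff[OF assms(2)] le_cube_obj_iff[OF order_trans[OF assms]]
  using collapse_less[OF assms] collapse_mono[OF assms] by auto

lemma collapse_id: "p < vertex_card T \<Longrightarrow> collapse T T p = p"
  by (erule block_decompE) (simp add: collapse_block)

lemma collapse_comp:
  assumes sub: "T \<subseteq> T'" "T' \<subseteq> T''" "T'' \<subseteq> S" and p: "p < vertex_card T''"
  shows "collapse T T'' p = collapse T T' (collapse T' T'' p)"
proof -
  obtain i r where "i \<le> n" and r: "r < block_size T'' i" and p: "p = block_start T'' i + r"
    using block_decompE[OF p] .
  have "0 < block_size T' i" "block_size T i \<le> block_size T' i"
    using block_size_subset[OF sub(2,3)] block_size_subset[OF sub(1) order_trans[OF sub(2,3)]] r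
    by auto
  moreover have "min r (block_size T' i - 1) < block_size T' i" using calculation by simp
  ultimately show ?thesis
    unfolding p collapse_block[OF r] collapse_block[OF \<open>min r _ < _\<close>] by simp
qed

lemma block_of_single:
  assumes s: "s \<in> S" and r: "r \<le> m s"
  shows "block_of {s} r = f s r"
  unfolding block_of_def
proof (rule Least_equality)
  have "{..r} \<subseteq> {j. j \<le> m s \<and> f s j < Suc (f s r)}"
    using f_mono[OF s] r by (auto simp: less_Suc_eq_le)
  then have "card {..r} \<le> card {j. j \<le> m s \<and> f s j < Suc (f s r)}"
    by (intro card_mono) auto
  then show "r < block_start {s} (Suc (f s r))" unfolding block_start_single[OF s] by simp
next
  fix j assume h: "r < block_start {s} (Suc j)"
  show "f s r \<le> j"
  proof (rule ccontr)
    assume j: "\<not> f s r \<le> j"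
    have "x < r" if "x \<le> m s" "f s x \<le> j" for x
    proof (rule ccontr)
      assume "\<not> x < r"
      then have "f s r \<le> f s x" using f_mono[OF s, of r x] that by simp
      then show False using j that by simp
    qed
    then have "{j'. j' \<le> m s \<and> f s j' < Suc j} \<subseteq> {..<r}" by (auto simp: less_Suc_eq_le)
    then have "card {j'. j' \<le> m s \<and> f s j' < Suc j} \<le> card {..<r}"
      by (intro card_mono) auto
    then show False using h unfolding block_start_single[OF s] by simp
  qed
qed

lemma cube_mor_lam_hom: "T \<subseteq> T' \<Longrightarrow> T' \<subseteq> S \<Longrightarrow> cube_mor T T' \<in> lam_hom (cube_obj T') (cube_obj T)"
  unfolding cube_mor_def by (rule delta_to_lambda_lam_hom[OF delta_mor_collapse])

lemma lam_cube_claw: "lam_cube S cube_obj cube_mor"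
  unfolding lam_cube_def
proof (intro conjI allI impI)
  fix T T' assume "T \<subseteq> T' \<and> T' \<subseteq> S"
  then show "cube_mor T T' \<in> lam_hom (cube_obj T') (cube_obj T)" using cube_mor_lam_hom by blast
next
  fix T assume "T \<subseteq> S"
  then have "cube_mor T T = delta_to_lambda (cube_obj T) (cube_obj T) (\<lambda>r. r)"
    unfolding cube_mor_def by (intro delta_to_lambda_cong) (simp add: le_cube_obj_iff collapse_id)
  then show "cube_mor T T = id" by (simp add: delta_to_lambda_id)
next
  fix T T' T'' assume sub: "T \<subseteq> T' \<and> T' \<subseteq> T'' \<and> T'' \<subseteq> S"
  then have "lam_comp (cube_obj T) (cube_mor T T') (cube_mor T' T'') =
      delta_to_lambda (cube_obj T'') (cube_obj T) (collapse T T' \<circ> collapse T' T'')"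
    unfolding cube_mor_def by (intro lam_comp_delta_to_lambda delta_mor_collapse) auto
  also have "\<dots> = cube_mor T T''"
    unfolding cube_mor_def
    by (intro delta_to_lambda_cong) (use sub collapse_comp[of T T' T''] in \<open>simp add: le_cube_obj_iff\<close>)
  finally show "cube_mor T T'' = lam_comp (cube_obj T) (cube_mor T T') (cube_mor T' T'')" ..
qed

lemma extends_claw_cube: "extends_claw S n m f cube_obj cube_mor"
  unfolding extends_claw_def
proof (intro conjI ballI lam_cube_claw cube_obj_empty)
  fix s assume s: "s \<in> S"
  show "cube_obj {s} = m s" by (rule cube_obj_single[OF s])
  have "collapse {} {s} r = f s r" if "r \<le> m s" for r
    unfolding collapse_def block_of_single[OF s that] block_start_empty
    by (simp add: block_size_def)
  then show "cube_mor {} {s} = delta_to_lambda (m s) n (f s)"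
    unfolding cube_mor_def cube_obj_single[OF s] cube_obj_empty by (rule delta_to_lambda_cong)
qed

end


locale compatible_claw_face = compatible_claw +
  fixes T and s s'
  assumes T: "T \<subseteq> S" and s: "s \<in> S" "s \<notin> T" and s': "s' \<in> S" "s' \<notin> T"
    and ne: "s \<noteq> s'"
begin

abbreviation "Ts \<equiv> insert s T"
abbreviation "Ts' \<equiv> insert s' T"
abbreviation "Tss' \<equiv> insert s (insert s' T)"

lemma face_subsets: "T \<subseteq> Ts" "T \<subseteq> Ts'" "Ts \<subseteq> Tss'" "Ts' \<subseteq> Tss'" "Ts \<subseteq> S" "Ts' \<subseteq> S" "Tss' \<subseteq> S"
  using T s s' by auto

lemma face_block_sizes:
  "block_size Ts i = fibre_card (m s) (f s) i * block_size T i"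
  "block_size Ts' i = fibre_card (m s') (f s') i * block_size T i"
  "block_size Tss' i = fibre_card (m s) (f s) i * (fibre_card (m s') (f s') i * block_size T i)"
  using block_size_insert[OF T s(2)] block_size_insert[OF T s'(2)]
    block_size_insert[OF face_subsets(6), of s] s ne by auto

lemma at_most_one_factor:
  assumes i: "i \<le> n"
  shows "(fibre_card (m s) (f s) i = 1 \<and> fibre_card (m s') (f s') i = 1) \<or>
    (block_size T i = 1 \<and> fibre_card (m s') (f s') i = 1) \<or>
    (block_size T i = 1 \<and> fibre_card (m s) (f s) i = 1)"
proof (cases "\<exists>t\<in>T. fibre_card (m t) (f t) i \<noteq> 1")
  case True
  then obtain t where t: "t \<in> T" "fibre_card (m t) (f t) i \<noteq> 1" by blast
  have "pair_compatible n (m t) (f t) (m u) (f u)" if "u \<in> {s, s'}" for u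
    using pair_compat t T s s' that by blast
  then have "fibre_card (m u) (f u) i = 1" if "u \<in> {s, s'}" for u
    using that t(2) i unfolding pair_compatible_def by blast
  then show ?thesis by simp
next
  case False
  then have "block_size T i = 1" unfolding block_size_def by (intro prod.neutral) blast
  moreover have "fibre_card (m s) (f s) i = 1 \<or> fibre_card (m s') (f s') i = 1"
    using pair_compat[OF s(1) s'(1) ne] i unfolding pair_compatible_def by blast
  ultimately show ?thesis by blast
qed

lemma face_commutes:
  "p < vertex_card Tss' \<Longrightarrow> collapse T Ts (collapse Ts Tss' p) = collapse T Ts' (collapse Ts' Tss' p)"
  using collapse_comp[OF face_subsets(1,3,7)] collapse_comp[OF face_subsets(2,4,7)] by simp

lemma face_jointly_surjective:
  assumes k: "k < vertex_card Ts" and k': "k' < vertex_card Ts'"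
    and eq: "collapse T Ts k = collapse T Ts' k'"
  obtains p where "p < vertex_card Tss'" and "collapse Ts Tss' p = k" and "collapse Ts' Tss' p = k'"
proof -
  obtain i r1 where i: "i \<le> n" and r1: "r1 < block_size Ts i" and k: "k = block_start Ts i + r1"
    using block_decompE[OF k] .
  obtain i2 r2 where r2: "r2 < block_size Ts' i2" and k': "k' = block_start Ts' i2 + r2"
    using block_decompE[OF k'] .
  have "i2 = i"
    using eq block_of_collapse[OF face_subsets(1,5) r1] block_of_collapse[OF face_subsets(2,6) r2]
    unfolding k k' by simp
  then have r2: "r2 < block_size Ts' i" and k': "k' = block_start Ts' i + r2" using r2 k' by simp_all
  have "min r1 (block_size T i - 1) = min r2 (block_size T i - 1)"
    using eq unfolding k k' collapse_block[OF r1] collapse_block[OF r2] by simp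
  note r = at_most_one_factor_cases[OF at_most_one_factor[OF i] r1[unfolded face_block_sizes]
      r2[unfolded face_block_sizes] this]
  show ?thesis
  proof (rule that[of "block_start Tss' i + max r1 r2"])
    show "block_start Tss' i + max r1 r2 < vertex_card Tss'"
      using block_start_add_less_vertex_card[OF i] r(1) by (simp add: face_block_sizes)
    show "collapse Ts Tss' (block_start Tss' i + max r1 r2) = k"
      using r unfolding k by (simp add: collapse_block face_block_sizes)
    show "collapse Ts' Tss' (block_start Tss' i + max r1 r2) = k'"
      using r unfolding k' by (simp add: collapse_block face_block_sizes)
  qed
qed

lemma face_injective:
  assumes p: "p < vertex_card Tss'" and p': "p' < vertex_card Tss'"
    and e: "collapse Ts Tss' p = collapse Ts Tss' p'" and e': "collapse Ts' Tss' p = collapse Ts' Tss' p'"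
  shows "p = p'"
proof -
  obtain i r where i: "i \<le> n" and r: "r < block_size Tss' i" and p: "p = block_start Tss' i + r"
    using block_decompE[OF p] .
  obtain i2 r' where r': "r' < block_size Tss' i2" and p': "p' = block_start Tss' i2 + r'"
    using block_decompE[OF p'] .
  have "i2 = i"
    using e block_of_collapse[OF face_subsets(3,7) r] block_of_collapse[OF face_subsets(3,7) r']
    unfolding p p' by simp
  then have r': "r' < block_size Tss' i" and p': "p' = block_start Tss' i + r'" using r' p' by simp_all
  have "min r (block_size Ts i - 1) = min r' (block_size Ts i - 1)"
    "min r (block_size Ts' i - 1) = min r' (block_size Ts' i - 1)"
    using e e' unfolding p p' collapse_block[OF r] collapse_block[OF r'] by simp_all
  then have "r = r'"
    by (intro at_most_one_factor_inj[OF at_most_one_factor[OF i] r[unfolded face_block_sizes]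
          r'[unfolded face_block_sizes]]) (simp_all only: face_block_sizes)
  then show ?thesis unfolding p p' by simp
qed

lemma face_lam_pullback:
  "lam_pullback (cube_obj Tss') (cube_obj Ts) (cube_obj Ts') (cube_obj T)
     (cube_mor Ts Tss') (cube_mor Ts' Tss') (cube_mor T Ts) (cube_mor T Ts')"
proof -
  note sub = face_subsets and le = le_cube_obj_iff[OF face_subsets(7)]
    le_cube_obj_iff[OF face_subsets(5)] le_cube_obj_iff[OF face_subsets(6)]
  have H: "set_pullback (cube_mor Ts Tss') (cube_mor Ts' Tss') (cube_mor T Ts) (cube_mor T Ts')"
    unfolding cube_mor_def
  proof (rule set_pullback_delta_to_lambda[OF delta_mor_collapse[OF sub(3,7)] delta_mor_collapse[OF sub(4,7)]
        delta_mor_collapse[OF sub(1,5)] delta_mor_collapse[OF sub(2,6)]])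
    show "collapse T Ts (collapse Ts Tss' p) = collapse T Ts' (collapse Ts' Tss' p)"
      if "p \<le> cube_obj Tss'" for p
      using face_commutes that le by simp
    show "\<exists>p\<le>cube_obj Tss'. collapse Ts Tss' p = k \<and> collapse Ts' Tss' p = k'"
      if "k \<le> cube_obj Ts" "k' \<le> cube_obj Ts'" "collapse T Ts k = collapse T Ts' k'" for k k'
      using face_jointly_surjective[of k k'] that le by metis
    show "p = p'" if "p \<le> cube_obj Tss'" "p' \<le> cube_obj Tss'"
      "collapse Ts Tss' p = collapse Ts Tss' p'" "collapse Ts' Tss' p = collapse Ts' Tss' p'" for p p'
      using face_injective that le by simp
  qed
  have hom: "cube_mor Ts Tss' \<in> lam_hom (cube_obj Tss') (cube_obj Ts)"
    "cube_mor Ts' Tss' \<in> lam_hom (cube_obj Tss') (cube_obj Ts')"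
    "cube_mor T Ts \<in> lam_hom (cube_obj Ts) (cube_obj T)"
    "cube_mor T Ts' \<in> lam_hom (cube_obj Ts') (cube_obj T)"
    using cube_mor_lam_hom sub by blast+
  note para = lam_hom_para_mor[OF hom(1)] lam_hom_para_mor[OF hom(2)]
  from lam_pullback_if_para_pullback[OF para_pullback_if_set_pullback[OF H para]
      H[unfolded set_pullback_def, THEN conjunct1] hom(1) para(2) hom(3,4)]
  show ?thesis by (simp add: lam_of_idem[OF hom(2)])
qed

end

lemma (in compatible_claw) strongly_cartesian_claw: "strongly_cartesian S cube_obj cube_mor"
  unfolding strongly_cartesian_def
proof (intro allI impI)
  fix T s s' assume "T \<subseteq> S \<and> s \<in> S \<and> s' \<in> S \<and> s \<noteq> s' \<and> s \<notin> T \<and> s' \<notin> T"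
  then interpret compatible_claw_face S n m f T s s'
    by unfold_locales auto
  show "lam_pullback (cube_obj Tss') (cube_obj Ts) (cube_obj Ts') (cube_obj T)
     (cube_mor Ts Tss') (cube_mor Ts' Tss') (cube_mor T Ts) (cube_mor T Ts')"
    by (rule face_lam_pullback)
qed

theorem proposition4p2p4:
  fixes S :: "'s set" and n :: nat and m :: "'s \<Rightarrow> nat" and f :: "'s \<Rightarrow> nat \<Rightarrow> nat"
  assumes "finite S"
    and "\<forall>s\<in>S. delta_mor (m s) n (f s)"
  shows "((\<exists>Qo Qm. extends_claw S n m f Qo Qm \<and> strongly_cartesian S Qo Qm) \<and>
          (\<forall>Qo Qm. extends_claw S n m f Qo Qm \<and> strongly_cartesian S Qo Qm
                    \<longrightarrow> strongly_cocartesian S Qo Qm))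
         \<longleftrightarrow> cyclically_compatible S n m f"
proof
  assume bicart: "(\<exists>Qo Qm. extends_claw S n m f Qo Qm \<and> strongly_cartesian S Qo Qm) \<and>
    (\<forall>Qo Qm. extends_claw S n m f Qo Qm \<and> strongly_cartesian S Qo Qm \<longrightarrow> strongly_cocartesian S Qo Qm)"
  then obtain Qo Qm where "extends_claw S n m f Qo Qm" and "strongly_cartesian S Qo Qm" by blast
  moreover from calculation have "strongly_cocartesian S Qo Qm" using bicart by blast
  ultimately show "cyclically_compatible S n m f"
    by (rule cyclically_compatible_if_bicartesian[OF assms])
next
  assume "cyclically_compatible S n m f"
  then interpret compatible_claw S n m f
    using assms by unfold_locales (simp_all add: cyclically_compatible_iff_pairwise)
  have "strongly_cocartesian S Qo Qm"
    if "extends_claw S n m f Qo Qm" and "strongly_cartesian S Qo Qm" for Qo Qm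
    using strongly_cocartesian_if_base_compatible[OF assms(1) that(2)]
      base_para_compatible_iff[OF that(1) assms(2)] pair_compat by blast
  then show "(\<exists>Qo Qm. extends_claw S n m f Qo Qm \<and> strongly_cartesian S Qo Qm) \<and>
    (\<forall>Qo Qm. extends_claw S n m f Qo Qm \<and> strongly_cartesian S Qo Qm \<longrightarrow> strongly_cocartesian S Qo Qm)"
    using extends_claw_cube strongly_cartesian_claw by blast
qed

end
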